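(* Let $\mathcal E$ be the set of parameters $\alpha \in (0,1)$ for which the map $T_\alpha$ does not have the matching property, i.e. for which there are no non-negative integers $M,N$ with $T_\alpha^M(\alpha) = T_\alpha^N(1-\alpha)$. Then $\mathcal E$ has Lebesgue measure zero and Hausdorff dimension $1$.
   Context: For $\alpha \in (0,1)$ let $D_\alpha = \bigcup_{n \ge 1} \big[ \frac{1}{n+\alpha}, \frac1n \big] \subseteq [0,1]$, let $D_\alpha^{\mathsf c} = [0,1]\setminus D_\alpha$, and let $I_\alpha = [\min\{\alpha,1-\alpha\},1]$. The flipped $\alpha$-continued fraction map $T_\alpha : I_\alpha \to I_\alpha$ is defined by $T_\alpha(x) = \frac1x - \lfloor \frac1x \rfloor$ if $x \in D_\alpha^{\mathsf c}$ and $T_\alpha(x) = 1 + \lfloor \frac1x \rfloor - \frac1x$ if $x \in D_\alpha$. The discontinuity points of $T_\alpha$ are the points $\frac1{k+\alpha}$, $k\ge1$, whose left and right limit values are $\alpha$ and $1-\alpha$ respectively; $T_\alpha$ is said to have matching if $T_\alpha^M(\alpha)=T_\alpha^N(1-\alpha)$ for some non-negative integers $M,N$. *)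

theory Defs
  imports "HOL-Analysis.Analysis"
begin

definition D_alpha :: "real \<Rightarrow> real set" where
  "D_alpha a = (\<Union>n\<in>{1::nat..}. {1 / (real n + a) .. 1 / real n})"

definition I_alpha :: "real \<Rightarrow> real set" where
  "I_alpha a = {min a (1 - a) .. 1}"

text \<open>The map T_alpha; only its values on I_alpha matter (orbits of a and 1-a stay there).\<close>
definition T_alpha :: "real \<Rightarrow> real \<Rightarrow> real" where
  "T_alpha a x = (if x \<in> D_alpha a then 1 + of_int \<lfloor>1 / x\<rfloor> - 1 / x
                  else 1 / x - of_int \<lfloor>1 / x\<rfloor>)"

definition has_matching :: "real \<Rightarrow> bool" where
  "has_matching a \<longleftrightarrow> (\<exists>M N :: nat. (T_alpha a ^^ M) a = (T_alpha a ^^ N) (1 - a))"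

definition non_matching_set :: "real set" where
  "non_matching_set = {a \<in> {0<..<1}. \<not> has_matching a}"

text \<open>Contribution diam(U)^s of a covering set, with the usual conventions
  diam(empty)^s = 0 and diam(U)^0 = 1 for nonempty U.\<close>
definition hcost :: "real \<Rightarrow> real set \<Rightarrow> ennreal" where
  "hcost s U = (if U = {} then 0 else if s = 0 then 1 else ennreal (diameter U powr s))"

definition hausdorff_pre :: "real \<Rightarrow> real \<Rightarrow> real set \<Rightarrow> ennreal" where
  "hausdorff_pre s \<delta> E =
     (INF U \<in> {U :: nat \<Rightarrow> real set. E \<subseteq> (\<Union>i. U i) \<and>
                 (\<forall>i. bounded (U i) \<and> diameter (U i) \<le> \<delta>)}.
        \<Sum>i. hcost s (U i))"

definition hausdorff_measure :: "real \<Rightarrow> real set \<Rightarrow> ennreal" where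
  "hausdorff_measure s E = (SUP \<delta> \<in> {0<..}. hausdorff_pre s \<delta> E)"

definition hausdorff_dim :: "real set \<Rightarrow> real" where
  "hausdorff_dim E = Inf {s. 0 \<le> s \<and> hausdorff_measure s E = 0}"

end

theory Submission
  imports Defs
begin

text \<open>
  Write G for the Gauss map. For \<open>\<alpha> < 1/2\<close> the orbits of \<open>\<alpha>\<close> and \<open>1 - \<alpha>\<close> meet after
  one and two steps. For \<open>\<alpha> > 1/2\<close> everything is governed by the Gauss orbit of \<open>\<alpha>\<close>:
  if \<open>G\<^sup>k \<alpha> < G \<alpha>\<close> for some \<open>k \<ge> 1\<close>, both \<open>T\<^sub>\<alpha>\<close>-orbits pass through the point
  determined by \<open>G\<^sup>k \<alpha>\<close>, so they match; if instead \<open>G\<^sup>k \<alpha> \<ge> G \<alpha>\<close> for all \<open>k \<ge> 1\<close> and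
  the Gauss orbit is injective, the orbit of \<open>\<alpha>\<close> only visits points \<open>1 - 1/(i + G\<^sup>c \<alpha>)\<close>
  with \<open>c\<close> even and the orbit of \<open>1 - \<alpha>\<close> only those with \<open>c\<close> odd, so they never meet.

  Hence an irrational non-matching parameter has bounded partial quotients, and these
  numbers form a null set: the cylinders of depth \<open>n\<close> with digits at most \<open>N\<close> have
  total length at most \<open>(1 - 1/(N + 1))\<^sup>n\<close>.

  For the lower bound fix
  \<open>s < 1\<close> and blocks of digits below \<open>N\<close> of a fixed length \<open>l\<close>, chosen such that
  \<open>\<Sum>\<^sub>v |I\<^sub>v|\<^sup>s \<ge> 2\<close>. Coding \<open>y \<in> [0, 1)\<close> by a sequence of blocks with weights
  proportional to \<open>|I\<^sub>v|\<^sup>s\<close> and sending it to \<open>[0; 1, N, v\<^sub>1, v\<^sub>2, \<dots>]\<close> gives a map that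
  is inverse Hoelder of exponent \<open>s\<close> and, off the countable set of eventually periodic codes,
  lands in the non-matching set by the criterion above. The mass distribution principle
  then gives a positive \<open>s\<close>-dimensional Hausdorff measure.
\<close>

section \<open>The Gauss map and the maps T_alpha\<close>

definition gauss_map :: "real \<Rightarrow> real" where
  "gauss_map x = 1 / x - of_int \<lfloor>1 / x\<rfloor>"

definition flip_le :: "real \<Rightarrow> real \<Rightarrow> real" where
  "flip_le a y = (if y \<le> a then 1 - y else y)"

lemma gauss_map_nonneg: "0 \<le> gauss_map x"
  unfolding gauss_map_def by linarith

lemma gauss_map_less_1: "gauss_map x < 1"
  unfolding gauss_map_def by linarith

lemma funpow_gauss_map_nonneg: "0 \<le> x \<Longrightarrow> 0 \<le> (gauss_map ^^ j) x"
  by (cases j) (auto simp: gauss_map_nonneg)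

lemma funpow_gauss_map_less_1: "x < 1 \<Longrightarrow> (gauss_map ^^ j) x < 1"
  by (cases j) (auto simp: gauss_map_less_1)

lemma gauss_map_inverse_branch:
  assumes "1 \<le> d" "0 \<le> s" "s < 1"
  shows "gauss_map (1 / (real d + s)) = s"
proof -
  have "\<lfloor>real d + s\<rfloor> = int d"
    using assms by linarith
  then show ?thesis
    unfolding gauss_map_def using assms by simp
qed

lemma inverse_branch_gauss_map:
  assumes "0 < x" "x \<le> 1"
  shows "1 \<le> nat \<lfloor>1 / x\<rfloor>"
        "x = 1 / (real (nat \<lfloor>1 / x\<rfloor>) + gauss_map x)"
proof -
  have "1 \<le> 1 / x"
    using assms by simp
  then show "1 \<le> nat \<lfloor>1 / x\<rfloor>"
    by linarith
  have "real (nat \<lfloor>1 / x\<rfloor>) + gauss_map x = 1 / x"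
    unfolding gauss_map_def using \<open>1 \<le> 1 / x\<close> by linarith
  then show "x = 1 / (real (nat \<lfloor>1 / x\<rfloor>) + gauss_map x)"
    using assms by simp
qed

lemma mem_D_alpha_iff:
  assumes "0 < a" "a < 1" "0 < x" "x \<le> 1"
  shows "x \<in> D_alpha a \<longleftrightarrow> gauss_map x \<le> a"
proof -
  define n where "n = nat \<lfloor>1 / x\<rfloor>"
  have "1 \<le> n" and x: "x = 1 / (real n + gauss_map x)"
    using inverse_branch_gauss_map[OF assms(3,4)] unfolding n_def by auto
  have n: "1 \<le> n" "1 / x = real n + gauss_map x"
    using \<open>1 \<le> n\<close> by (simp, subst (1) x, simp)
  have "x \<in> D_alpha a \<longleftrightarrow> (\<exists>m::nat. 1 \<le> m \<and> real m \<le> 1 / x \<and> 1 / x \<le> real m + a)"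
    unfolding D_alpha_def using assms by (auto simp: field_simps)
  also have "\<dots> \<longleftrightarrow> 1 / x \<le> real n + a"
  proof
    assume "\<exists>m::nat. 1 \<le> m \<and> real m \<le> 1 / x \<and> 1 / x \<le> real m + a"
    then obtain m :: nat where m: "real m \<le> 1 / x" "1 / x \<le> real m + a"
      by blast
    then have "m = n"
      using n gauss_map_nonneg[of x] gauss_map_less_1[of x] \<open>a < 1\<close> by linarith
    then show "1 / x \<le> real n + a"
      using m by simp
  qed (use n gauss_map_nonneg[of x] in auto)
  finally show ?thesis
    using n by simp
qed

lemma T_alpha_eq_flip_gauss_map:
  assumes "0 < a" "a < 1" "0 < x" "x \<le> 1"
  shows "T_alpha a x = flip_le a (gauss_map x)"
  using mem_D_alpha_iff[OF assms] unfolding T_alpha_def flip_le_def gauss_map_def by auto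

lemma rational_if_funpow_gauss_map_eq_0: "(gauss_map ^^ j) x = 0 \<Longrightarrow> x \<in> \<rat>"
proof (induction j arbitrary: x)
  case (Suc j)
  then have "gauss_map x \<in> \<rat>"
    by (simp add: funpow_Suc_right del: funpow.simps)
  moreover have "1 / x = gauss_map x + of_int \<lfloor>1 / x\<rfloor>"
    unfolding gauss_map_def by simp
  ultimately have "inverse (1 / x) \<in> \<rat>"
    by (metis Rats_add Rats_of_int Rats_inverse)
  then show ?case
    by simp
qed simp

lemma has_matching_if_less_half:
  assumes "0 < a" "a < 1/2"
  shows "has_matching a"
proof -
  define n where "n = nat \<lfloor>1 / a\<rfloor>"
  define f where "f = gauss_map a"
  have a: "a = 1 / (real n + f)"
    using inverse_branch_gauss_map[of a] assms unfolding n_def f_def by auto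
  have f: "0 \<le> f" "f < 1"
    using gauss_map_nonneg gauss_map_less_1 unfolding f_def by auto
  have "0 < real n + f"
    using assms a by (metis zero_less_divide_1_iff)
  then have big: "2 < real n + f"
    using assms a by (simp add: field_simps)
  define r where "r = 1 / (real n - 1 + f)"
  have r: "0 < r" "r < 1" "a < r"
    using big unfolding r_def a by (auto simp: frac_less2)
  have "1 - a = 1 / (real 1 + r)"
    unfolding a r_def using big by (simp add: field_simps)
  then have "T_alpha a (1 - a) = r"
    using T_alpha_eq_flip_gauss_map[of a "1 - a"] gauss_map_inverse_branch[of 1 r] assms r
    by (simp add: flip_le_def)
  moreover have "gauss_map r = f"
    unfolding r_def using gauss_map_inverse_branch[of "n - 1" f] big f by (simp add: of_nat_diff)
  ultimately have "(T_alpha a ^^ 1) a = (T_alpha a ^^ 2) (1 - a)"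
    using T_alpha_eq_flip_gauss_map[of a] assms r unfolding f_def by (simp add: numeral_2_eq_2)
  then show ?thesis
    unfolding has_matching_def by blast
qed

section \<open>Matching for parameters above one half\<close>

definition cobranch :: "nat \<Rightarrow> real \<Rightarrow> real" where
  "cobranch i s = 1 - 1 / (real i + s)"

lemma cobranch_pos: "1 \<le> i \<Longrightarrow> 0 < s \<Longrightarrow> 0 < cobranch i s"
  unfolding cobranch_def by (simp add: field_simps)

lemma cobranch_less_1: "1 \<le> i \<Longrightarrow> 0 < s \<Longrightarrow> cobranch i s < 1"
  unfolding cobranch_def by simp

lemma gauss_map_cobranch:
  assumes "2 \<le> i" "0 < s" "s < 1"
  shows "gauss_map (cobranch i s) = 1 / (real i - 1 + s)"
proof -
  have "1 < real i - 1 + s"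
    using assms by simp
  moreover have "cobranch i s = 1 / (real 1 + 1 / (real i - 1 + s))"
    unfolding cobranch_def using calculation by (simp add: field_simps)
  ultimately show ?thesis
    using gauss_map_inverse_branch[of 1 "1 / (real i - 1 + s)"] by simp
qed

lemma gauss_map_cobranch_1:
  assumes "0 < s" "s < 1"
  shows "gauss_map (cobranch 1 s) = gauss_map s"
proof -
  have "1 / cobranch 1 s = 1 / s + 1"
    unfolding cobranch_def using assms by (simp add: field_simps)
  then show ?thesis
    unfolding gauss_map_def by simp
qed

lemma one_minus_eq_cobranch:
  assumes "0 < w" "w < 1"
  shows "1 - w = cobranch (nat \<lfloor>1 / w\<rfloor>) (gauss_map w)"
  using inverse_branch_gauss_map[of w] assms unfolding cobranch_def by simp

locale alpha_gt_half =
  fixes a :: real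
  assumes half_less_alpha: "1/2 < a" and alpha_less_1: "a < 1"
begin

abbreviation T :: "real \<Rightarrow> real" where
  "T \<equiv> T_alpha a"

lemma alpha_pos: "0 < a"
  using half_less_alpha by simp

lemma eq_inverse_branch: "a = 1 / (1 + gauss_map a)"
  and gauss_map_pos: "0 < gauss_map a"
proof -
  have "1 < 1 / a" "1 / a < 2"
    using half_less_alpha alpha_less_1 by (auto simp: field_simps)
  then have "gauss_map a = 1 / a - 1"
    unfolding gauss_map_def by (simp add: floor_eq_iff)
  then show "a = 1 / (1 + gauss_map a)" "0 < gauss_map a"
    using \<open>1 < 1 / a\<close> by simp_all
qed

lemma inverse_branch_le_iff:
  assumes "0 \<le> s"
  shows "1 / (1 + s) \<le> a \<longleftrightarrow> gauss_map a \<le> s"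
proof -
  have "1 / (1 + s) \<le> 1 / (1 + gauss_map a) \<longleftrightarrow> gauss_map a \<le> s"
    using assms gauss_map_pos by (simp add: field_simps)
  then show ?thesis
    using eq_inverse_branch by simp
qed

lemma T_eq: "0 < x \<Longrightarrow> x \<le> 1 \<Longrightarrow> T x = flip_le a (gauss_map x)"
  using T_alpha_eq_flip_gauss_map alpha_pos alpha_less_1 by blast

lemma T_cobranch:
  assumes "3 \<le> i" "0 < s" "s < 1"
  shows "T (cobranch i s) = cobranch (i - 1) s"
proof -
  have "1 / (real i - 1 + s) \<le> 1 / 2"
    using assms by (simp add: field_simps)
  then have "1 / (real i - 1 + s) \<le> a"
    using half_less_alpha by linarith
  then show ?thesis
    using T_eq[of "cobranch i s"] assms cobranch_pos[of i s] cobranch_less_1[of i s]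
      gauss_map_cobranch[of i s]
    by (simp add: flip_le_def cobranch_def of_nat_diff)
qed

lemma T_cobranch_2: "0 < s \<Longrightarrow> s < 1 \<Longrightarrow> T (cobranch 2 s) = flip_le a (1 / (1 + s))"
  using T_eq[of "cobranch 2 s"] cobranch_pos[of 2 s] cobranch_less_1[of 2 s]
    gauss_map_cobranch[of 2 s]
  by simp

lemma T_cobranch_1: "0 < s \<Longrightarrow> s < 1 \<Longrightarrow> T (cobranch 1 s) = flip_le a (gauss_map s)"
  using T_eq[of "cobranch 1 s"] cobranch_pos[of 1 s] cobranch_less_1[of 1 s]
    gauss_map_cobranch_1[of s]
  by simp

lemma T_inverse_branch_1: "0 < s \<Longrightarrow> s < 1 \<Longrightarrow> T (1 / (1 + s)) = flip_le a s"
  using T_eq[of "1 / (1 + s)"] gauss_map_inverse_branch[of 1 s] by simp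

lemma T_cobranch_Suc:
  assumes "gauss_map a \<le> s" "s < 1" "1 \<le> m"
  shows "T (cobranch (Suc m) s) = cobranch m s"
proof (cases "m = 1")
  case True
  have "0 < s"
    using assms(1) gauss_map_pos by linarith
  then show ?thesis
    using T_cobranch_2 inverse_branch_le_iff[of s] assms True
    by (simp add: flip_le_def cobranch_def numeral_2_eq_2)
next
  case False
  then show ?thesis
    using T_cobranch[of "Suc m" s] assms gauss_map_pos by simp
qed

lemma funpow_T_cobranch_ge:
  "gauss_map a \<le> s \<Longrightarrow> s < 1 \<Longrightarrow> (T ^^ m) (cobranch (Suc m) s) = cobranch 1 s"
  by (induction m) (simp_all add: T_cobranch_Suc funpow_Suc_right del: funpow.simps)

lemma funpow_T_cobranch_less:
  assumes "s < gauss_map a" "0 < s"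
  shows "(T ^^ Suc m) (cobranch (Suc (Suc m)) s) = 1 / (1 + s)"
proof (induction m)
  case 0
  have "s < 1"
    using assms(1) gauss_map_less_1 less_trans by blast
  then show ?case
    using T_cobranch_2 inverse_branch_le_iff[of s] assms by (simp add: flip_le_def numeral_2_eq_2)
next
  case (Suc m)
  have "s < 1"
    using assms(1) gauss_map_less_1 less_trans by blast
  then have "T (cobranch (Suc (Suc (Suc m))) s) = cobranch (Suc (Suc m)) s"
    using T_cobranch[of "Suc (Suc (Suc m))" s] assms by simp
  then show ?case
    using Suc by (simp add: funpow_Suc_right del: funpow.simps)
qed

lemma funpow_T_flip_inverse_branch:
  assumes "1 \<le> m" "0 < s" "s < 1"
  shows "\<exists>j. (T ^^ j) (flip_le a (1 / (real m + s))) =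
           flip_le a (if s < gauss_map a then s else gauss_map s)"
proof -
  define w where "w = 1 / (real m + s)"
  obtain m' where m': "m = Suc m'"
    using assms(1) by (cases m) auto
  consider (above) "a < w" | (ge) "w \<le> a" "gauss_map a \<le> s" | (less) "w \<le> a" "s < gauss_map a"
    by linarith
  then show ?thesis
  proof cases
    case above
    then have "1 / 2 < 1 / (real m + s)"
      using half_less_alpha unfolding w_def by linarith
    then have "real m + s < 2"
      using assms by (simp add: field_simps)
    then have "w = 1 / (1 + s)"
      using assms unfolding w_def by simp
    moreover from this have "s < gauss_map a"
      using above inverse_branch_le_iff[of s] assms by simp
    ultimately show ?thesis
      using above T_inverse_branch_1[OF assms(2,3)] unfolding w_def flip_le_def
      by (intro exI[of _ 1]) simp
  next
    case ge
    have "(T ^^ m) (cobranch m s) = T (cobranch 1 s)"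
      using funpow_T_cobranch_ge[OF ge(2) assms(3)] unfolding m' by simp
    then show ?thesis
      using ge T_cobranch_1[OF assms(2,3)] unfolding w_def flip_le_def cobranch_def
      by (intro exI[of _ m]) simp
  next
    case less
    have "m' \<noteq> 0"
    proof
      assume "m' = 0"
      then show False
        using less inverse_branch_le_iff[of s] assms unfolding w_def m' by simp
    qed
    then obtain m'' where m'': "m = Suc (Suc m'')"
      using m' by (cases m') auto
    have "(T ^^ m) (cobranch m s) = T (1 / (1 + s))"
      using funpow_T_cobranch_less[OF less(2) assms(2)] unfolding m'' by simp
    then show ?thesis
      using less T_inverse_branch_1[OF assms(2,3)] unfolding w_def flip_le_def cobranch_def
      by (intro exI[of _ m]) simp
  qed
qed

context
  assumes gauss_orbit_pos: "\<And>j. 0 < (gauss_map ^^ j) a"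
begin

definition reaches :: "real \<Rightarrow> nat \<Rightarrow> bool" where
  "reaches z k \<longleftrightarrow> (\<exists>i. (T ^^ i) z = flip_le a ((gauss_map ^^ k) a))"

lemma reaches_next:
  assumes "reaches z k"
  shows "reaches z (if (gauss_map ^^ Suc k) a < gauss_map a then Suc k else Suc (Suc k))"
proof -
  define w where "w = (gauss_map ^^ k) a"
  define m where "m = nat \<lfloor>1 / w\<rfloor>"
  have w: "0 < w" "w \<le> 1"
    using gauss_orbit_pos[of k] funpow_gauss_map_less_1[OF alpha_less_1, of k] unfolding w_def
    by auto
  have s: "0 < gauss_map w" "gauss_map w < 1"
    using gauss_orbit_pos[of "Suc k"] gauss_map_less_1 unfolding w_def by auto
  have "1 \<le> m" "w = 1 / (real m + gauss_map w)"
    using inverse_branch_gauss_map[OF w] unfolding m_def by auto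
  then obtain j where
    "(T ^^ j) (flip_le a w) =
       flip_le a (if gauss_map w < gauss_map a then gauss_map w else gauss_map (gauss_map w))"
    using funpow_T_flip_inverse_branch[OF _ s] by metis
  moreover obtain i where "(T ^^ i) z = flip_le a w"
    using assms unfolding reaches_def w_def by blast
  ultimately have "(T ^^ (j + i)) z =
       flip_le a (if gauss_map w < gauss_map a then gauss_map w else gauss_map (gauss_map w))"
    by (simp add: funpow_add)
  then show ?thesis
    unfolding reaches_def w_def by (auto split: if_splits)
qed

lemma has_matching_if_funpow_gauss_map_less:
  assumes "1 \<le> k" "(gauss_map ^^ k) a < gauss_map a"
  shows "has_matching a"
proof -
  have reaches_k: "reaches z k" if "reaches z p" "p \<le> k" for z p
    using that
  proof (induction "k - p" arbitrary: p rule: less_induct)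
    case less
    define p' where "p' = (if (gauss_map ^^ Suc p) a < gauss_map a then Suc p else Suc (Suc p))"
    show ?case
    proof (cases "p = k")
      case False
      then have "Suc p \<le> k"
        using less.prems by simp
      moreover have "Suc p \<noteq> k" if "\<not> (gauss_map ^^ Suc p) a < gauss_map a"
        using assms(2) that by auto
      ultimately have "p < p'" "p' \<le> k"
        unfolding p'_def by (auto split: if_splits)
      then show ?thesis
        using less.hyps[of p'] reaches_next[OF less.prems(1)] unfolding p'_def by auto
    qed (use less in simp)
  qed
  have "reaches (1 - a) 0"
    unfolding reaches_def flip_le_def by (intro exI[of _ 0]) simp
  moreover have "reaches a 1"
    unfolding reaches_def using T_eq[of a] alpha_pos alpha_less_1 by (intro exI[of _ 1]) simp
  ultimately have "reaches (1 - a) k" "reaches a k"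
    using reaches_k assms(1) by auto
  then show ?thesis
    unfolding reaches_def has_matching_def by metis
qed

context
  assumes gauss_orbit_ge: "\<And>k. 1 \<le> k \<Longrightarrow> gauss_map a \<le> (gauss_map ^^ k) a"
begin

lemma gauss_orbit_unit: "0 < (gauss_map ^^ j) a" "(gauss_map ^^ j) a < 1"
  using gauss_orbit_pos funpow_gauss_map_less_1[OF alpha_less_1] by auto

lemma gauss_orbit_le: "1 \<le> j \<Longrightarrow> (gauss_map ^^ j) a \<le> a"
proof (rule ccontr)
  define w where "w = (gauss_map ^^ j) a"
  assume "1 \<le> j" "\<not> (gauss_map ^^ j) a \<le> a"
  then have "a < w" "0 < w" "w < 1"
    using gauss_orbit_unit unfolding w_def by auto
  then have "1 / w < 2" "1 \<le> 1 / w"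
    using half_less_alpha by (auto simp: field_simps)
  then have "\<lfloor>1 / w\<rfloor> = 1"
    by (simp add: floor_eq_iff)
  then have "w = 1 / (1 + gauss_map w)"
    using inverse_branch_gauss_map[of w] \<open>0 < w\<close> \<open>w < 1\<close> by simp
  moreover have "gauss_map a \<le> gauss_map w"
    using gauss_orbit_ge[of "Suc j"] unfolding w_def by simp
  ultimately have "w \<le> a"
    using inverse_branch_le_iff gauss_map_nonneg by metis
  then show False
    using \<open>a < w\<close> by simp
qed

definition on_cobranch :: "bool \<Rightarrow> real \<Rightarrow> bool" where
  "on_cobranch e z \<longleftrightarrow>
     (\<exists>c i. 1 \<le> c \<and> even c = e \<and> 1 \<le> i \<and> z = cobranch i ((gauss_map ^^ c) a))"

lemma on_cobranchI: "1 \<le> c \<Longrightarrow> 1 \<le> i \<Longrightarrow> on_cobranch (even c) (cobranch i ((gauss_map ^^ c) a))"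
  unfolding on_cobranch_def by blast

lemma on_cobranch_one_minus:
  assumes "1 \<le> c"
  shows "on_cobranch (odd c) (1 - (gauss_map ^^ c) a)"
proof -
  define w where "w = (gauss_map ^^ c) a"
  have "0 < w" "w < 1"
    using gauss_orbit_unit unfolding w_def by auto
  then have "1 \<le> nat \<lfloor>1 / w\<rfloor>"
            "1 - w = cobranch (nat \<lfloor>1 / w\<rfloor>) ((gauss_map ^^ Suc c) a)"
    using inverse_branch_gauss_map[of w] one_minus_eq_cobranch[of w] unfolding w_def by auto
  then show ?thesis
    using on_cobranchI[of "Suc c" "nat \<lfloor>1 / w\<rfloor>"] unfolding w_def by simp
qed

lemma on_cobranch_T:
  assumes "on_cobranch e z"
  shows "on_cobranch e (T z)"
proof -
  obtain c i where c: "1 \<le> c" "even c = e" "1 \<le> i" and z: "z = cobranch i ((gauss_map ^^ c) a)"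
    using assms unfolding on_cobranch_def by blast
  define s where "s = (gauss_map ^^ c) a"
  have s: "0 < s" "s < 1"
    using gauss_orbit_unit unfolding s_def by auto
  consider "3 \<le> i" | "i = 2" | "i = 1"
    using c by linarith
  then show ?thesis
  proof cases
    case 1
    then show ?thesis
      using T_cobranch[OF 1 s] on_cobranchI[OF c(1), of "i - 1"] c z unfolding s_def by simp
  next
    case 2
    have "T z = cobranch 1 s"
      using T_cobranch_2[OF s] inverse_branch_le_iff[of s] gauss_orbit_ge[OF c(1)] s z 2
      unfolding flip_le_def cobranch_def s_def by simp
    then show ?thesis
      using on_cobranchI[OF c(1), of 1] c(2) unfolding s_def by simp
  next
    case 3
    have "T z = 1 - (gauss_map ^^ Suc c) a"
      using T_cobranch_1[OF s] gauss_orbit_le[of "Suc c"] z 3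
      unfolding flip_le_def s_def by simp
    then show ?thesis
      using on_cobranch_one_minus[of "Suc c"] c by simp
  qed
qed

lemma on_cobranch_funpow_T_alpha: "on_cobranch True ((T ^^ Suc n) a)"
proof (induction n)
  case 0
  have "T a = 1 - (gauss_map ^^ 1) a"
    using T_eq[of a] alpha_pos alpha_less_1 gauss_orbit_le[of 1] by (simp add: flip_le_def)
  then show ?case
    using on_cobranch_one_minus[of 1] by simp
qed (simp add: on_cobranch_T)

lemma on_cobranch_funpow_T_one_minus_alpha: "on_cobranch False ((T ^^ n) (1 - a))"
proof (induction n)
  case 0
  have "1 - a = cobranch 1 ((gauss_map ^^ 1) a)"
    using eq_inverse_branch unfolding cobranch_def by simp
  then show ?case
    using on_cobranchI[of 1 1] by simp
qed (simp add: on_cobranch_T)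

lemma not_has_matching_if_gauss_orbit_inj:
  assumes inj: "\<And>i j. 1 \<le> i \<Longrightarrow> 1 \<le> j \<Longrightarrow> (gauss_map ^^ i) a = (gauss_map ^^ j) a \<Longrightarrow> i = j"
  shows "\<not> has_matching a"
proof
  assume "has_matching a"
  then obtain M N where "(T ^^ M) a = (T ^^ N) (1 - a)"
    unfolding has_matching_def by auto
  then have "(T ^^ Suc M) a = (T ^^ Suc N) (1 - a)"
    by simp
  then obtain c i c' i' where c: "1 \<le> c" "even c" "1 \<le> i" "1 \<le> c'" "odd c'" "1 \<le> i'"
    and eq: "cobranch i ((gauss_map ^^ c) a) = cobranch i' ((gauss_map ^^ c') a)"
    using on_cobranch_funpow_T_alpha[of M] on_cobranch_funpow_T_one_minus_alpha[of "Suc N"]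
    unfolding on_cobranch_def by metis
  define s where "s = (gauss_map ^^ c) a"
  define s' where "s' = (gauss_map ^^ c') a"
  have s: "0 < s" "s < 1" "0 < s'" "s' < 1"
    using gauss_orbit_unit unfolding s_def s'_def by auto
  have "real i + s = real i' + s'"
    using eq s unfolding cobranch_def s_def[symmetric] s'_def[symmetric] by simp
  moreover have "\<lfloor>real i + s\<rfloor> = int i" "\<lfloor>real i' + s'\<rfloor> = int i'"
    using s by (simp_all add: floor_eq_iff)
  ultimately have "s = s'"
    by simp
  then have "c = c'"
    using inj c unfolding s_def s'_def by simp
  then show False
    using c by simp
qed

end

end

end

section \<open>Continued fraction cylinders\<close>

fun cf_branch :: "nat list \<Rightarrow> real \<Rightarrow> real" where
  "cf_branch [] x = x"
| "cf_branch (d # w) x = 1 / (real d + cf_branch w x)"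

text \<open>
  \<open>cf_p w / cf_q w\<close> is the convergent \<open>[0; w]\<close> and \<open>cf_p' w / cf_q' w\<close> the previous one.
\<close>

fun cf_coeffs :: "nat list \<Rightarrow> real \<times> real \<times> real \<times> real" where
  "cf_coeffs [] = (0, 1, 1, 0)"
| "cf_coeffs (d # w) =
     (case cf_coeffs w of (p, p', q, q') \<Rightarrow> (q, q', real d * q + p, real d * q' + p'))"

definition "cf_p w = fst (cf_coeffs w)"
definition "cf_p' w = fst (snd (cf_coeffs w))"
definition "cf_q w = fst (snd (snd (cf_coeffs w)))"
definition "cf_q' w = snd (snd (snd (cf_coeffs w)))"

lemma cf_coeffs_simps [simp]:
  "cf_p [] = 0" "cf_p' [] = 1" "cf_q [] = 1" "cf_q' [] = 0"
  "cf_p (d # w) = cf_q w" "cf_p' (d # w) = cf_q' w"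
  "cf_q (d # w) = real d * cf_q w + cf_p w" "cf_q' (d # w) = real d * cf_q' w + cf_p' w"
  unfolding cf_p_def cf_p'_def cf_q_def cf_q'_def by (auto split: prod.split)

definition pos_digits :: "nat list \<Rightarrow> bool" where
  "pos_digits w \<longleftrightarrow> (\<forall>d\<in>set w. 1 \<le> d)"

lemma pos_digits_simps [simp]:
  "pos_digits []"
  "pos_digits (d # w) \<longleftrightarrow> 1 \<le> d \<and> pos_digits w"
  "pos_digits (u @ v) \<longleftrightarrow> pos_digits u \<and> pos_digits v"
  unfolding pos_digits_def by auto

lemma cf_coeffs_bounds:
  "pos_digits w \<Longrightarrow> 0 \<le> cf_p w \<and> 0 \<le> cf_p' w \<and> 1 \<le> cf_q w \<and> 0 \<le> cf_q' w \<and> cf_q' w \<le> cf_q w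
     \<and> (w \<noteq> [] \<longrightarrow> cf_p' w \<le> cf_p w)"
proof (induction w)
  case (Cons d w)
  then have d: "1 \<le> real d"
    and IH: "0 \<le> cf_p w" "0 \<le> cf_p' w" "1 \<le> cf_q w" "0 \<le> cf_q' w"
            "cf_q' w \<le> cf_q w"
      "w \<noteq> [] \<longrightarrow> cf_p' w \<le> cf_p w"
    by auto
  have "real d * cf_q' w + cf_p' w \<le> real d * cf_q w + cf_p w"
  proof (cases "w = []")
    case False
    have "real d * cf_q' w \<le> real d * cf_q w"
      using IH d by (intro mult_left_mono) auto
    then show ?thesis
      using IH False by linarith
  qed (use d in simp)
  moreover have "1 * 1 \<le> real d * cf_q w"
    using d IH by (intro mult_mono) auto
  ultimately show ?case
    using IH d by simp
qed simp

lemma cf_q_ge_1: "pos_digits w \<Longrightarrow> 1 \<le> cf_q w"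
  using cf_coeffs_bounds by blast

lemma cf_q'_nonneg: "pos_digits w \<Longrightarrow> 0 \<le> cf_q' w"
  using cf_coeffs_bounds by blast

lemma cf_branch_unit: "pos_digits w \<Longrightarrow> 0 \<le> x \<Longrightarrow> x \<le> 1 \<Longrightarrow> 0 \<le> cf_branch w x \<and> cf_branch w x \<le> 1"
  by (induction w) auto

lemma cf_branch_nonneg: "pos_digits w \<Longrightarrow> 0 \<le> x \<Longrightarrow> 0 \<le> cf_branch w x"
  by (induction w) auto

lemma cf_branch_append: "cf_branch (u @ v) x = cf_branch u (cf_branch v x)"
  by (induction u) auto

lemma cf_branch_eq_moebius:
  "pos_digits w \<Longrightarrow> 0 \<le> x \<Longrightarrow> cf_branch w x = (cf_p w + cf_p' w * x) / (cf_q w + cf_q' w * x)"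
proof (induction w)
  case (Cons d w)
  have "1 \<le> cf_q w" "0 \<le> cf_q' w * x"
    using cf_coeffs_bounds[of w] Cons.prems by auto
  then have "0 < cf_q w + cf_q' w * x"
    by linarith
  then have "1 / (real d + (cf_p w + cf_p' w * x) / (cf_q w + cf_q' w * x))
      = (cf_q w + cf_q' w * x) / (real d * (cf_q w + cf_q' w * x) + (cf_p w + cf_p' w * x))"
    by (simp add: field_simps)
  then show ?case
    using Cons by (simp add: algebra_simps)
qed simp

lemma cf_branch_tendsto:
  assumes "pos_digits w" "X \<longlonglongrightarrow> x" "\<And>n. 0 \<le> X n" "0 \<le> x"
  shows "(\<lambda>n. cf_branch w (X n)) \<longlonglongrightarrow> cf_branch w x"
proof -
  have "1 \<le> cf_q w" "0 \<le> cf_q' w * x"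
    using cf_coeffs_bounds[OF assms(1)] assms(4) by auto
  then have "cf_q w + cf_q' w * x \<noteq> 0"
    by linarith
  then have "(\<lambda>n. (cf_p w + cf_p' w * X n) / (cf_q w + cf_q' w * X n))
      \<longlonglongrightarrow> (cf_p w + cf_p' w * x) / (cf_q w + cf_q' w * x)"
    using assms(2) by (intro tendsto_intros) auto
  then show ?thesis
    using cf_branch_eq_moebius assms by simp
qed

definition cf_denom :: "nat list \<Rightarrow> real \<Rightarrow> real" where
  "cf_denom w x = cf_q w + cf_q' w * x"

lemma cf_denom_ge: "pos_digits w \<Longrightarrow> 0 \<le> x \<Longrightarrow> cf_q w \<le> cf_denom w x"
  unfolding cf_denom_def using cf_q'_nonneg by simp

lemma cf_denom_le: "pos_digits w \<Longrightarrow> 0 \<le> x \<Longrightarrow> x \<le> 1 \<Longrightarrow> cf_denom w x \<le> cf_q w + cf_q' w"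
  unfolding cf_denom_def using cf_q'_nonneg by (simp add: mult_left_le)

lemma cf_denom_Cons:
  assumes "pos_digits (d # w)" "0 \<le> x"
  shows "cf_denom (d # w) x = (real d + cf_branch w x) * cf_denom w x"
proof -
  have "0 < cf_denom w x"
    using cf_denom_ge[of w x] cf_q_ge_1[of w] assms by simp
  then have "cf_branch w x * cf_denom w x = cf_p w + cf_p' w * x"
    using cf_branch_eq_moebius[of w x] assms unfolding cf_denom_def by simp
  then show ?thesis
    unfolding cf_denom_def by (simp add: algebra_simps)
qed

lemma cf_denom_append:
  "pos_digits (u @ v) \<Longrightarrow> 0 \<le> x \<Longrightarrow> cf_denom (u @ v) x = cf_denom u (cf_branch v x) * cf_denom v x"
proof (induction u)
  case (Cons d u)
  then have "0 \<le> cf_branch v x"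
    using cf_branch_nonneg by auto
  then show ?case
    using Cons cf_denom_Cons[of d "u @ v" x] cf_denom_Cons[of d u "cf_branch v x"]
    by (simp add: cf_branch_append)
qed (simp add: cf_denom_def)

lemma dist_cf_branch:
  "pos_digits w \<Longrightarrow> 0 \<le> x \<Longrightarrow> 0 \<le> y \<Longrightarrow>
    \<bar>cf_branch w x - cf_branch w y\<bar> = \<bar>x - y\<bar> / (cf_denom w x * cf_denom w y)"
proof (induction w)
  case (Cons d w)
  define X where "X = cf_branch w x"
  define Y where "Y = cf_branch w y"
  have pos: "0 < real d + X" "0 < real d + Y"
    using cf_branch_nonneg Cons.prems unfolding X_def Y_def by (auto intro: add_pos_nonneg)
  have "cf_branch (d # w) x - cf_branch (d # w) y = (Y - X) / ((real d + X) * (real d + Y))"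
    using pos unfolding X_def Y_def by (simp add: field_simps)
  then have "\<bar>cf_branch (d # w) x - cf_branch (d # w) y\<bar> = \<bar>X - Y\<bar> / ((real d + X) * (real d + Y))"
    using pos by (simp add: abs_minus_commute)
  also have "\<bar>X - Y\<bar> = \<bar>x - y\<bar> / (cf_denom w x * cf_denom w y)"
    using Cons unfolding X_def Y_def by simp
  finally show ?case
    using cf_denom_Cons Cons.prems unfolding X_def Y_def by (simp add: field_simps)
qed (simp add: cf_denom_def)

lemma cf_q_snoc: assumes "pos_digits w" "1 \<le> d"
  shows "cf_q (w @ [d]) = real d * cf_q w + cf_q' w" "cf_q' (w @ [d]) = cf_q w"
proof -
  have pw': "pos_digits (w @ [d])" using assms by simp
  have e0: "cf_denom (w @ [d]) 0 = cf_denom w (1 / real d) * cf_denom [d] 0"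
    using cf_denom_append[OF pw', of 0] by simp
  have e1: "cf_denom (w @ [d]) 1 = cf_denom w (1 / (real d + 1)) * cf_denom [d] 1"
    using cf_denom_append[OF pw', of 1] by simp
  have d: "0 < real d" using assms by simp
  have "cf_q (w @ [d]) = (cf_q w + cf_q' w / real d) * real d"
    using e0 unfolding cf_denom_def by simp
  also have "(cf_q w + cf_q' w / real d) * real d = real d * cf_q w + cf_q' w"
    using d by (simp add: distrib_right)
  finally show q: "cf_q (w @ [d]) = real d * cf_q w + cf_q' w" .
  have "cf_q (w @ [d]) + cf_q' (w @ [d]) = (cf_q w + cf_q' w / (real d + 1)) * (real d + 1)"
    using e1 unfolding cf_denom_def by simp
  also have "(cf_q w + cf_q' w / (real d + 1)) * (real d + 1) = cf_q w * (real d + 1) + cf_q' w"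
    using d by (simp add: distrib_right)
  finally show "cf_q' (w @ [d]) = cf_q w" using q by (simp add: algebra_simps)
qed

definition cylinder_length :: "nat list \<Rightarrow> real" where
  "cylinder_length w = 1 / (cf_q w * (cf_q w + cf_q' w))"

lemma cylinder_length_pos: "pos_digits w \<Longrightarrow> 0 < cylinder_length w"
  unfolding cylinder_length_def using cf_q_ge_1[of w] cf_q'_nonneg[of w] by simp

lemma cylinder_length_eq_dist: "pos_digits w \<Longrightarrow> cylinder_length w = \<bar>cf_branch w 0 - cf_branch w 1\<bar>"
  using dist_cf_branch[of w 0 1] unfolding cylinder_length_def cf_denom_def by simp

lemma dist_cf_branch_lower: assumes "pos_digits w" "0 \<le> x" "x \<le> 1" "0 \<le> y" "y \<le> 1"
  shows "\<bar>x - y\<bar> * cylinder_length w / 2 \<le> \<bar>cf_branch w x - cf_branch w y\<bar>"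
proof -
  have q: "1 \<le> cf_q w" "0 \<le> cf_q' w" "cf_q' w \<le> cf_q w"
    using cf_coeffs_bounds[OF assms(1)] by auto
  have dx: "cf_q w \<le> cf_denom w x" "cf_denom w x \<le> cf_q w + cf_q' w"
    using cf_denom_ge cf_denom_le assms by auto
  have dy: "cf_q w \<le> cf_denom w y" "cf_denom w y \<le> cf_q w + cf_q' w"
    using cf_denom_ge cf_denom_le assms by auto
  have "cf_denom w x * cf_denom w y \<le> (cf_q w + cf_q' w) * (cf_q w + cf_q' w)"
    using dx dy q by (intro mult_mono) auto
  also have "\<dots> \<le> 2 * (cf_q w * (cf_q w + cf_q' w))"
  proof -
    have "cf_q' w * (cf_q w + cf_q' w) \<le> cf_q w * (cf_q w + cf_q' w)"
      using q by (intro mult_right_mono) auto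
    then show ?thesis by (simp add: algebra_simps)
  qed
  finally have le: "cf_denom w x * cf_denom w y \<le> 2 * (cf_q w * (cf_q w + cf_q' w))" .
  have pp: "0 < cf_denom w x * cf_denom w y" using dx dy q by simp
  have "\<bar>x - y\<bar> * cylinder_length w / 2 = \<bar>x - y\<bar> / (2 * (cf_q w * (cf_q w + cf_q' w)))"
    unfolding cylinder_length_def by simp
  also have "\<dots> \<le> \<bar>x - y\<bar> / (cf_denom w x * cf_denom w y)"
    using le pp by (intro divide_left_mono) auto
  finally show ?thesis using dist_cf_branch assms by simp
qed

lemma dist_cf_branch_upper: assumes "pos_digits w" "0 \<le> x" "0 \<le> y"
  shows "\<bar>cf_branch w x - cf_branch w y\<bar> \<le> 2 * cylinder_length w * \<bar>x - y\<bar>"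
proof -
  have q: "1 \<le> cf_q w" "0 \<le> cf_q' w" "cf_q' w \<le> cf_q w"
    using cf_coeffs_bounds[OF assms(1)] by auto
  have dx: "cf_q w \<le> cf_denom w x" "cf_q w \<le> cf_denom w y" using cf_denom_ge assms by auto
  have "cf_q w * (cf_q w + cf_q' w) \<le> 2 * (cf_q w * cf_q w)"
    using q by (simp add: algebra_simps)
  also have "\<dots> \<le> 2 * (cf_denom w x * cf_denom w y)"
    using dx q by (intro mult_left_mono mult_mono) auto
  finally have le: "cf_q w * (cf_q w + cf_q' w) \<le> 2 * (cf_denom w x * cf_denom w y)" .
  have pp: "0 < cf_q w * (cf_q w + cf_q' w)" using q by simp
  have "\<bar>x - y\<bar> / (cf_denom w x * cf_denom w y) \<le> \<bar>x - y\<bar> / ((cf_q w * (cf_q w + cf_q' w)) / 2)"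
    using le pp by (intro divide_left_mono) auto
  also have "\<dots> = 2 * cylinder_length w * \<bar>x - y\<bar>"
    unfolding cylinder_length_def by simp
  finally show ?thesis using dist_cf_branch assms by simp
qed

lemma cylinder_length_append:
  assumes "pos_digits u" "pos_digits v"
  shows "cylinder_length u * cylinder_length v / 2 \<le> cylinder_length (u @ v)"
proof -
  have "0 \<le> cf_branch v 0" "cf_branch v 0 \<le> 1" "0 \<le> cf_branch v 1"
       "cf_branch v 1 \<le> 1"
    using cf_branch_unit[OF assms(2)] by auto
  then have "\<bar>cf_branch v 0 - cf_branch v 1\<bar> * cylinder_length u / 2
      \<le> \<bar>cf_branch u (cf_branch v 0) - cf_branch u (cf_branch v 1)\<bar>"
    using dist_cf_branch_lower[OF assms(1)] by blast
  moreover have "cylinder_length (u @ v) =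
      \<bar>cf_branch u (cf_branch v 0) - cf_branch u (cf_branch v 1)\<bar>"
    using cylinder_length_eq_dist[of "u @ v"] assms by (simp add: cf_branch_append)
  ultimately show ?thesis
    using cylinder_length_eq_dist[OF assms(2)] by (simp add: mult.commute)
qed

lemma cylinder_length_snoc:
  assumes "pos_digits w" "1 \<le> d"
  shows "cylinder_length (w @ [d]) =
           1 / ((real d * cf_q w + cf_q' w) * (real d * cf_q w + cf_q' w + cf_q w))"
  unfolding cylinder_length_def using cf_q_snoc[OF assms] by simp

lemma cylinder_length_snoc_le_half:
  assumes "pos_digits w" "1 \<le> d"
  shows "cylinder_length (w @ [d]) \<le> cylinder_length w / 2"
proof -
  have q: "1 \<le> cf_q w" "0 \<le> cf_q' w" "cf_q' w \<le> cf_q w"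
    using cf_coeffs_bounds[OF assms(1)] by auto
  have d: "1 \<le> real d" using assms by simp
  have a1: "cf_q w + cf_q' w \<le> real d * cf_q w + cf_q' w"
    using d q by (simp add: mult_right_mono)
  have "1 * cf_q w \<le> real d * cf_q w" using d q by (intro mult_right_mono) auto
  then have a2: "2 * cf_q w \<le> real d * cf_q w + cf_q' w + cf_q w" using q by linarith
  have "(2 * cf_q w) * (cf_q w + cf_q' w)
      \<le> (real d * cf_q w + cf_q' w + cf_q w) * (real d * cf_q w + cf_q' w)"
    using a1 a2 q by (intro mult_mono) auto
  then have "2 * (cf_q w * (cf_q w + cf_q' w))
      \<le> (real d * cf_q w + cf_q' w + cf_q w) * (real d * cf_q w + cf_q' w)"
    by (simp add: mult.assoc)
  then have "2 * (cf_q w * (cf_q w + cf_q' w))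
      \<le> (real d * cf_q w + cf_q' w) * (real d * cf_q w + cf_q' w + cf_q w)"
    by (simp add: mult.commute)
  moreover have z: "0 < cf_q w * (cf_q w + cf_q' w)" using q by simp
  ultimately have "1 / ((real d * cf_q w + cf_q' w) * (real d * cf_q w + cf_q' w + cf_q w))
      \<le> 1 / (2 * (cf_q w * (cf_q w + cf_q' w)))"
    by (intro divide_left_mono) auto
  also have "\<dots> = cylinder_length w / 2" unfolding cylinder_length_def by simp
  finally show ?thesis using cylinder_length_snoc[OF assms] by simp
qed

lemma cylinder_length_le_power: "pos_digits w \<Longrightarrow> cylinder_length w \<le> (1/2) ^ length w"
proof (induction w rule: rev_induct)
  case (snoc d w)
  then have "cylinder_length (w @ [d]) \<le> cylinder_length w / 2"
    using cylinder_length_snoc_le_half by simp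
  then show ?case
    using snoc by simp
qed (simp add: cylinder_length_def)

lemma sum_cylinder_length_snoc:
  assumes "pos_digits w"
  shows "(\<Sum>d\<in>{1..M}. cylinder_length (w @ [d]))
           = cylinder_length w * (1 - (cf_q w + cf_q' w) / (cf_q w * (real M + 1) + cf_q' w))"
proof (induction M)
  case 0
  have "0 < cf_q w + cf_q' w"
    using cf_coeffs_bounds[OF assms] by simp
  then show ?case
    by simp
next
  case (Suc M)
  have q: "1 \<le> cf_q w" "0 \<le> cf_q' w"
    using cf_coeffs_bounds[OF assms] by auto
  define A where "A = cf_q w * (real M + 1) + cf_q' w"
  define B where "B = cf_q w * (real M + 2) + cf_q' w"
  have "0 < cf_q w * (real M + 1)"
    using q by simp
  then have AB: "0 < A" "0 < B" "B - A = cf_q w"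
    using q unfolding A_def B_def by (auto simp: algebra_simps)
  have "0 < cf_q w * (cf_q w + cf_q' w)"
    using q by simp
  then have "cylinder_length w * (cf_q w + cf_q' w) = 1 / cf_q w"
    unfolding cylinder_length_def using q by (simp add: field_simps)
  moreover have "1 / A - 1 / B = cf_q w / (A * B)"
    using AB by (simp add: field_simps)
  moreover have "cylinder_length w * (1 - (cf_q w + cf_q' w) / B)
      - cylinder_length w * (1 - (cf_q w + cf_q' w) / A)
      = cylinder_length w * (cf_q w + cf_q' w) * (1 / A - 1 / B)"
    using AB by (simp add: field_simps)
  ultimately have "cylinder_length w * (1 - (cf_q w + cf_q' w) / B)
      - cylinder_length w * (1 - (cf_q w + cf_q' w) / A) = 1 / (A * B)"
    using q by simp
  moreover have "cylinder_length (w @ [Suc M]) = 1 / (A * B)"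
    using cylinder_length_snoc[OF assms, of "Suc M"] unfolding A_def B_def
    by (simp add: algebra_simps)
  moreover have "cf_q w * (real (Suc M) + 1) + cf_q' w = B"
    unfolding B_def by simp
  ultimately show ?case
    using Suc unfolding A_def by simp
qed

definition cf_digit :: "real \<Rightarrow> nat \<Rightarrow> nat" where
  "cf_digit x j = nat \<lfloor>1 / (gauss_map ^^ j) x\<rfloor>"

definition cf_digits :: "real \<Rightarrow> nat \<Rightarrow> nat list" where
  "cf_digits x n = map (cf_digit x) [0..<n]"

lemma cf_branch_cf_digits:
  assumes "x < 1" "\<And>j. 0 < (gauss_map ^^ j) x"
  shows "pos_digits (cf_digits x n)" "x = cf_branch (cf_digits x n) ((gauss_map ^^ n) x)"
proof (induction n)
  case (Suc n)
  define y where "y = (gauss_map ^^ n) x"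
  have "0 < y" "y \<le> 1"
    using assms funpow_gauss_map_less_1[of x n] unfolding y_def by (auto simp: less_imp_le)
  then have "1 \<le> cf_digit x n" "y = cf_branch [cf_digit x n] ((gauss_map ^^ Suc n) x)"
    using inverse_branch_gauss_map unfolding cf_digit_def y_def by auto
  then show "pos_digits (cf_digits x (Suc n))"
            "x = cf_branch (cf_digits x (Suc n)) ((gauss_map ^^ Suc n) x)"
    using Suc unfolding cf_digits_def y_def by (simp_all add: cf_branch_append)
qed (simp_all add: cf_digits_def)

fun digit_words :: "nat \<Rightarrow> nat \<Rightarrow> nat list list" where
  "digit_words D 0 = [[]]"
| "digit_words D (Suc n) = concat (map (\<lambda>w. map (\<lambda>d. w @ [d]) [1..<Suc D]) (digit_words D n))"

lemma mem_digit_words_iff: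
  "w \<in> set (digit_words D n) \<longleftrightarrow> length w = n \<and> (\<forall>d\<in>set w. 1 \<le> d \<and> d \<le> D)"
proof (induction n arbitrary: w)
  case (Suc n)
  show ?case
  proof
    assume "length w = Suc n \<and> (\<forall>d\<in>set w. 1 \<le> d \<and> d \<le> D)"
    moreover obtain u d where "w = u @ [d]"
      using calculation by (metis length_Suc_conv_rev)
    ultimately show "w \<in> set (digit_words D (Suc n))"
      using Suc by force
  qed (use Suc in auto)
qed auto

lemma pos_digits_digit_words: "w \<in> set (digit_words D n) \<Longrightarrow> pos_digits w"
  by (simp add: mem_digit_words_iff pos_digits_def)

lemma digit_words_nonempty: "1 \<le> D \<Longrightarrow> digit_words D n \<noteq> []"
  using mem_digit_words_iff[of "replicate n 1" D n] by auto

lemma distinct_digit_words: "1 \<le> D \<Longrightarrow> distinct (digit_words D n)"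
proof (induction n)
  case (Suc n)
  define f where "f w = map (\<lambda>d. w @ [d]) [1..<Suc D]" for w
  have "inj_on f (set (digit_words D n))"
  proof (rule inj_onI)
    fix u v
    assume "f u = f v"
    then have "hd (f u) = hd (f v)"
      by simp
    then show "u = v"
      unfolding f_def using Suc.prems by (simp add: upt_rec)
  qed
  then have "distinct (concat (map f (digit_words D n)))"
    using Suc by (intro distinct_concat) (auto simp: distinct_map inj_on_def f_def)
  then show ?case
    unfolding f_def by simp
qed simp

lemma sum_list_map_concat:
  "sum_list (map f (concat xss)) = sum_list (map (\<lambda>xs. sum_list (map f xs)) xss)"
  by (induction xss) auto

lemma sum_cylinder_length_digit_words_Suc:
  "sum_list (map cylinder_length (digit_words D (Suc n)))
     = sum_list (map (\<lambda>w. \<Sum>d\<in>{1..D}. cylinder_length (w @ [d])) (digit_words D n))"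
proof -
  have "sum_list (map (\<lambda>d. cylinder_length (w @ [d])) [1..<Suc D])
      = (\<Sum>d\<in>{1..D}. cylinder_length (w @ [d]))"
    for w
    by (simp only: sum_set_upt_conv_sum_list_nat[symmetric] set_upt atLeastLessThanSuc_atLeastAtMost)
  then show ?thesis
    by (simp add: sum_list_map_concat comp_def)
qed

lemma sum_cylinder_length_digit_words_le:
  assumes "1 \<le> D"
  shows "sum_list (map cylinder_length (digit_words D n)) \<le> (1 - 1 / (real D + 1)) ^ n"
proof (induction n)
  case (Suc n)
  have children: "(\<Sum>d\<in>{1..D}. cylinder_length (w @ [d]))
      \<le> (1 - 1 / (real D + 1)) * cylinder_length w"
    if "pos_digits w" for w
  proof -
    have q: "1 \<le> cf_q w" "0 \<le> cf_q' w"
      using cf_coeffs_bounds[OF that] by auto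
    then have "0 < cf_q w * (real D + 1) + cf_q' w"
      by (simp add: add_pos_nonneg)
    moreover have "cf_q w * (real D + 1) + cf_q' w \<le> (cf_q w + cf_q' w) * (real D + 1)"
      using q by (simp add: algebra_simps)
    ultimately have "1 / (real D + 1) \<le> (cf_q w + cf_q' w) / (cf_q w * (real D + 1) + cf_q' w)"
      by (simp add: field_simps)
    then show ?thesis
      using sum_cylinder_length_snoc[OF that, of D] cylinder_length_pos[OF that]
      by (simp add: mult.commute mult_left_mono)
  qed
  have "sum_list (map cylinder_length (digit_words D (Suc n)))
      \<le> sum_list (map (\<lambda>w. (1 - 1 / (real D + 1)) * cylinder_length w) (digit_words D n))"
    unfolding sum_cylinder_length_digit_words_Suc
    by (rule sum_list_mono) (use children pos_digits_digit_words in blast)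
  also have "\<dots> \<le> (1 - 1 / (real D + 1)) * (1 - 1 / (real D + 1)) ^ n"
    using Suc by (simp add: sum_list_const_mult mult_left_mono)
  finally show ?case
    by simp
qed (simp add: cylinder_length_def)

lemma sum_cylinder_length_digit_words_ge:
  assumes "1 \<le> D"
  shows "(1 - 2 / (real D + 1)) ^ n \<le> sum_list (map cylinder_length (digit_words D n))"
proof (induction n)
  case (Suc n)
  have children: "(1 - 2 / (real D + 1)) * cylinder_length w
      \<le> (\<Sum>d\<in>{1..D}. cylinder_length (w @ [d]))"
    if "pos_digits w" for w
  proof -
    have q: "1 \<le> cf_q w" "0 \<le> cf_q' w" "cf_q' w \<le> cf_q w"
      using cf_coeffs_bounds[OF that] by auto
    then have "0 < cf_q w * (real D + 1) + cf_q' w"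
      by (simp add: add_pos_nonneg)
    moreover have "cf_q' w * (real D + 1) \<le> cf_q w * (real D + 1)"
      using q by (intro mult_right_mono) auto
    then have "(cf_q w + cf_q' w) * (real D + 1) \<le> 2 * (cf_q w * (real D + 1) + cf_q' w)"
      using q by (simp add: algebra_simps)
    ultimately have "(cf_q w + cf_q' w) / (cf_q w * (real D + 1) + cf_q' w) \<le> 2 / (real D + 1)"
      by (simp add: field_simps)
    then show ?thesis
      using sum_cylinder_length_snoc[OF that, of D] cylinder_length_pos[OF that]
      by (simp add: mult.commute mult_left_mono)
  qed
  have "0 \<le> 1 - 2 / (real D + 1)"
    using assms by (simp add: field_simps)
  then have "(1 - 2 / (real D + 1)) ^ Suc n
      \<le> sum_list (map (\<lambda>w. (1 - 2 / (real D + 1)) * cylinder_length w) (digit_words D n))"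
    using Suc by (simp add: sum_list_const_mult mult_left_mono)
  also have "\<dots> \<le> sum_list (map cylinder_length (digit_words D (Suc n)))"
    unfolding sum_cylinder_length_digit_words_Suc
    by (rule sum_list_mono) (use children pos_digits_digit_words in blast)
  finally show ?case .
qed (simp add: cylinder_length_def)

section \<open>The non-matching set is Lebesgue-null\<close>

lemma null_sets_lebesgue_if_small_covers:
  fixes S :: "real set"
  assumes "\<And>e. 0 < e \<Longrightarrow> \<exists>A\<in>sets lborel. S \<subseteq> A \<and> emeasure lborel A \<le> ennreal e"
  shows "S \<in> null_sets lebesgue"
proof -
  have "\<forall>n. \<exists>A. A \<in> sets lborel \<and> S \<subseteq> A \<and> emeasure lborel A \<le> ennreal (1 / real (Suc n))"
  proof
    fix n
    have "0 < 1 / real (Suc n)"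
      by simp
    then show "\<exists>A. A \<in> sets lborel \<and> S \<subseteq> A \<and> emeasure lborel A \<le> ennreal (1 / real (Suc n))"
      using assms by blast
  qed
  from choice[OF this] obtain A where A: "\<forall>n. A n \<in> sets lborel \<and> S \<subseteq> A n \<and> emeasure lborel (A n)
      \<le> ennreal (1 / real (Suc n))"
    by blast
  have small: "emeasure lborel (\<Inter>n. A n) \<le> ennreal e" if e: "0 < e" for e
  proof -
    obtain n where "1 / real (Suc n) < e"
      using nat_approx_posE[OF e] by blast
    then have "ennreal (1 / real (Suc n)) \<le> ennreal e"
      by (intro ennreal_leI) simp
    moreover have "emeasure lborel (\<Inter>n. A n) \<le> emeasure lborel (A n)"
      using A by (intro emeasure_mono) auto
    ultimately show ?thesis
      using A by (blast intro: order_trans)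
  qed
  have "emeasure lborel (\<Inter>n. A n) \<le> 0"
    by (rule ennreal_le_epsilon) (simp add: small)
  moreover have "(\<Inter>n. A n) \<in> sets lborel"
    using A by (intro sets.countable_INT) auto
  ultimately have "(\<Inter>n. A n) \<in> null_sets lborel"
    by (simp add: null_sets_def)
  then show ?thesis
    using A null_sets_completion_iff2 by blast
qed

definition bounded_type :: "nat \<Rightarrow> real set" where
  "bounded_type N = {x. 0 < x \<and> x < 1 \<and> (\<forall>j. 1 / real N \<le> (gauss_map ^^ j) x)}"

lemma bounded_type_near_cylinder:
  assumes "x \<in> bounded_type N" "1 \<le> N"
  obtains w where "w \<in> set (digit_words N n)"
                  "\<bar>x - cf_branch w 0\<bar> \<le> 2 * cylinder_length w"
proof -
  have x: "0 < x" "x < 1" "\<And>j. 1 / real N \<le> (gauss_map ^^ j) x"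
    using assms unfolding bounded_type_def by auto
  have "0 < 1 / real N"
    using assms(2) by simp
  then have pos: "0 < (gauss_map ^^ j) x" for j
    using x(3)[of j] by linarith
  define w where "w = cf_digits x n"
  have w: "pos_digits w" "x = cf_branch w ((gauss_map ^^ n) x)"
    using cf_branch_cf_digits[OF x(2) pos] unfolding w_def by auto
  have "cf_digit x j \<le> N" for j
  proof -
    have "1 / (gauss_map ^^ j) x \<le> real N"
      using x(3)[of j] pos[of j] assms(2) by (simp add: field_simps)
    then show ?thesis
      unfolding cf_digit_def by (simp add: floor_le_iff nat_le_iff)
  qed
  then have "w \<in> set (digit_words N n)"
    using w(1) unfolding mem_digit_words_iff w_def pos_digits_def by (auto simp: cf_digits_def)
  moreover have "\<bar>x - cf_branch w 0\<bar> \<le> 2 * cylinder_length w * (gauss_map ^^ n) x"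
    using dist_cf_branch_upper[OF w(1), of "(gauss_map ^^ n) x" 0] pos[of n] w(2) by simp
  moreover have "2 * cylinder_length w * (gauss_map ^^ n) x \<le> 2 * cylinder_length w"
    using pos[of n] funpow_gauss_map_less_1[OF x(2), of n] cylinder_length_pos[OF w(1)]
    by (simp add: mult_left_le)
  ultimately show ?thesis
    using that by simp
qed

definition cylinder_cover :: "nat \<Rightarrow> nat \<Rightarrow> real set" where
  "cylinder_cover N n = (\<Union>w\<in>set (digit_words N n).
     {cf_branch w 0 - 2 * cylinder_length w .. cf_branch w 0 + 2 * cylinder_length w})"

lemma bounded_type_subset_cylinder_cover: "1 \<le> N \<Longrightarrow> bounded_type N \<subseteq> cylinder_cover N n"
  unfolding cylinder_cover_def
  by (auto elim!: bounded_type_near_cylinder[of _ N n] simp: abs_le_iff)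

lemma emeasure_cylinder_cover:
  assumes "1 \<le> N"
  shows "emeasure lborel (cylinder_cover N n) \<le> ennreal (4 * (1 - 1 / (real N + 1)) ^ n)"
proof -
  let ?ws = "set (digit_words N n)"
  have "emeasure lborel (cylinder_cover N n)
      \<le> (\<Sum>w\<in>?ws. emeasure lborel {cf_branch w 0 - 2 * cylinder_length w .. cf_branch w 0 + 2 * cylinder_length w})"
    unfolding cylinder_cover_def by (intro emeasure_subadditive_finite) auto
  also have "\<dots> = (\<Sum>w\<in>?ws. ennreal (4 * cylinder_length w))"
    using cylinder_length_pos pos_digits_digit_words
    by (intro sum.cong refl) (simp add: less_imp_le)
  also have "\<dots> = ennreal (4 * (\<Sum>w\<in>?ws. cylinder_length w))"
    using cylinder_length_pos pos_digits_digit_words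
    by (simp add: sum_ennreal less_imp_le sum_distrib_left)
  also have "(\<Sum>w\<in>?ws. cylinder_length w) = sum_list (map cylinder_length (digit_words N n))"
    using distinct_digit_words[OF assms(1)] by (simp add: sum_list_distinct_conv_sum_set)
  also have "ennreal (4 * \<dots>) \<le> ennreal (4 * (1 - 1 / (real N + 1)) ^ n)"
    using sum_cylinder_length_digit_words_le[OF assms(1)] by (intro ennreal_leI) simp
  finally show ?thesis .
qed

lemma bounded_type_null:
  assumes "1 \<le> N"
  shows "bounded_type N \<in> null_sets lebesgue"
proof (rule null_sets_lebesgue_if_small_covers)
  fix e :: real
  assume "0 < e"
  define c where "c = 1 - 1 / (real N + 1)"
  have "0 \<le> c" "c < 1"
    unfolding c_def by (auto simp: field_simps)
  then obtain n where n: "c ^ n < e / 4"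
    using real_arch_pow_inv[of "e / 4" c] \<open>0 < e\<close> by auto
  have "ennreal (4 * c ^ n) \<le> ennreal e"
    using n by (intro ennreal_leI) simp
  then have "emeasure lborel (cylinder_cover N n) \<le> ennreal e"
    using emeasure_cylinder_cover[OF assms, of n] unfolding c_def by (rule order_trans[rotated])
  moreover have "cylinder_cover N n \<in> sets lborel"
    unfolding cylinder_cover_def by (intro sets.finite_UN) auto
  ultimately show "\<exists>A\<in>sets lborel. bounded_type N \<subseteq> A \<and> emeasure lborel A \<le> ennreal e"
    using bounded_type_subset_cylinder_cover[OF assms] by blast
qed

lemma half_less_if_irrational_not_has_matching:
  assumes "0 < a" "a \<notin> \<rat>" "\<not> has_matching a"
  shows "1/2 < a"
proof -
  have "(1/2 :: real) \<in> \<rat>"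
    by (intro Rats_divide) simp_all
  then have "a \<noteq> 1/2"
    using assms(2) by metis
  moreover have "\<not> a < 1/2"
    using has_matching_if_less_half assms(1,3) by blast
  ultimately show ?thesis
    by simp
qed

lemma (in alpha_gt_half) bounded_type_if_irrational_not_has_matching:
  assumes "a \<notin> \<rat>" "\<not> has_matching a"
  shows "a \<in> bounded_type (nat \<lceil>1 / gauss_map a\<rceil> + 2)"
proof -
  define N where "N = nat \<lceil>1 / gauss_map a\<rceil> + 2"
  have pos: "0 < (gauss_map ^^ j) a" for j
    using rational_if_funpow_gauss_map_eq_0 funpow_gauss_map_nonneg[of a j] alpha_pos assms(1)
    by (metis less_eq_real_def)
  have "1 / gauss_map a \<le> real N" "0 < real N"
    unfolding N_def by linarith+
  then have "1 / real N \<le> gauss_map a"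
    using gauss_map_pos by (simp add: field_simps)
  moreover have "gauss_map a \<le> (gauss_map ^^ j) a" if "1 \<le> j" for j
    using has_matching_if_funpow_gauss_map_less[OF pos that] assms(2) not_le by blast
  moreover have "1 / real N \<le> 1/2"
    unfolding N_def by simp
  ultimately have "1 / real N \<le> (gauss_map ^^ j) a" for j
    using half_less_alpha by (cases "j = 0") (auto intro: order_trans)
  then show ?thesis
    unfolding bounded_type_def N_def using alpha_pos alpha_less_1 by simp
qed

lemma non_matching_set_subset: "non_matching_set \<subseteq> \<rat> \<union> (\<Union>N\<in>{1..}. bounded_type N)"
proof
  fix a
  assume "a \<in> non_matching_set"
  then have a: "0 < a" "a < 1" "\<not> has_matching a"
    unfolding non_matching_set_def by auto
  show "a \<in> \<rat> \<union> (\<Union>N\<in>{1..}. bounded_type N)"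
  proof (cases "a \<in> \<rat>")
    case False
    then interpret alpha_gt_half a
      using a half_less_if_irrational_not_has_matching by unfold_locales auto
    have "1 \<le> nat \<lceil>1 / gauss_map a\<rceil> + 2"
      by simp
    then show ?thesis
      using bounded_type_if_irrational_not_has_matching False a(3) by blast
  qed simp
qed

lemma non_matching_set_null: "non_matching_set \<in> null_sets lebesgue"
proof -
  have "\<rat> \<in> null_sets lebesgue"
    by (intro null_sets_completionI countable_imp_null_set_lborel countable_rat)
  moreover have "(\<Union>N\<in>{1..}. bounded_type N) \<in> null_sets lebesgue"
    by (intro null_sets_UN' bounded_type_null) auto
  ultimately show ?thesis
    using non_matching_set_subset null_sets_completion_subset null_sets.Un by metis
qed

section \<open>Hausdorff measure on the real line\<close>

lemma hausdorff_pre_le_hausdorff_measure: "0 < \<delta> \<Longrightarrow> hausdorff_pre s \<delta> E \<le> hausdorff_measure s E"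
  unfolding hausdorff_measure_def by (rule SUP_upper) simp

lemma unit_interval_subset_grid:
  assumes "1 \<le> n"
  shows "{0..1} \<subseteq> (\<Union>i<n. {real i / real n .. real (Suc i) / real n})"
proof
  fix x :: real
  assume x: "x \<in> {0..1}"
  define i where "i = min (n - 1) (nat \<lfloor>x * real n\<rfloor>)"
  have n: "0 < real n"
    using assms by simp
  have "real i / real n \<le> x \<and> x \<le> real (Suc i) / real n"
  proof (cases "nat \<lfloor>x * real n\<rfloor> \<le> n - 1")
    case True
    then have "real i = of_int \<lfloor>x * real n\<rfloor>"
      unfolding i_def using x by simp
    then have "real i \<le> x * real n" "x * real n < real i + 1"
      by linarith+
    then show ?thesis
      using n by (simp add: field_simps)
  next
    case False
    then have "real n \<le> x * real n"
      by linarith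
    then have "1 \<le> x"
      using n by (simp add: mult_le_cancel_right1)
    then have "x = 1"
      using x by simp
    then show ?thesis
      using False n unfolding i_def by (simp add: field_simps of_nat_diff)
  qed
  moreover have "i < n"
    unfolding i_def using assms by simp
  ultimately show "x \<in> (\<Union>i<n. {real i / real n .. real (Suc i) / real n})"
    by auto
qed

lemma hausdorff_pre_unit_interval_le:
  assumes "E \<subseteq> {0..1}" "1 \<le> n" "1 / real n \<le> \<delta>" "0 < s"
  shows "hausdorff_pre s \<delta> E \<le> ennreal (real n powr (1 - s))"
proof -
  define U where "U i = (if i < n then {real i / real n .. real (Suc i) / real n} else {})" for i
  have diam: "diameter (U i) = 1 / real n" "U i \<noteq> {}" if "i < n" for i
  proof -
    have "real i / real n \<le> real (Suc i) / real n"
      by (simp add: divide_right_mono)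
    then have "diameter (U i) = real (Suc i) / real n - real i / real n" "U i \<noteq> {}"
      unfolding U_def using that by simp_all
    then show "diameter (U i) = 1 / real n" "U i \<noteq> {}"
      by (simp_all add: diff_divide_distrib[symmetric])
  qed
  have "E \<subseteq> (\<Union>i. U i)"
  proof
    fix x
    assume "x \<in> E"
    then obtain i where "i < n" "x \<in> {real i / real n .. real (Suc i) / real n}"
      using assms(1) unit_interval_subset_grid[OF assms(2)] by blast
    then show "x \<in> (\<Union>i. U i)"
      unfolding U_def by (intro UN_I[of i]) auto
  qed
  moreover have "bounded (U i) \<and> diameter (U i) \<le> \<delta>" for i
  proof (cases "i < n")
    case False
    have "0 < 1 / real n"
      using assms(2) by simp
    then have "0 < \<delta>"
      using assms(3) by linarith
    then show ?thesis
      unfolding U_def using False by simp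
  qed (use diam assms(3) in \<open>simp add: U_def\<close>)
  ultimately have "hausdorff_pre s \<delta> E \<le> (\<Sum>i. hcost s (U i))"
    unfolding hausdorff_pre_def by (intro INF_lower) auto
  also have "(\<Sum>i. hcost s (U i)) = (\<Sum>i<n. hcost s (U i))"
    by (rule suminf_finite) (auto simp: U_def hcost_def)
  also have "\<dots> = (\<Sum>i<n. ennreal ((1 / real n) powr s))"
    using diam assms(4) unfolding hcost_def by simp
  also have "\<dots> = ennreal (real n * (1 / real n) powr s)"
    by (simp add: ennreal_mult' ennreal_of_nat_eq_real_of_nat)
  also have "real n * (1 / real n) powr s = real n powr (1 - s)"
    using assms(2) by (simp add: powr_diff powr_divide)
  finally show ?thesis .
qed

lemma hausdorff_measure_eq_0_if_subset_unit_interval: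
  assumes "1 < s" "E \<subseteq> {0..1}"
  shows "hausdorff_measure s E = 0"
proof -
  have small: "hausdorff_pre s \<delta> E \<le> ennreal e" if "0 < \<delta>" "0 < e" for \<delta> e
  proof -
    have "(\<lambda>n. real n powr (1 - s)) \<longlonglongrightarrow> 0"
      using assms(1) by (intro tendsto_neg_powr filterlim_real_sequentially) simp
    then have "eventually (\<lambda>n. real n powr (1 - s) < e) sequentially"
      using \<open>0 < e\<close> by (rule order_tendstoD(2))
    moreover have "eventually (\<lambda>n. 1 / real n < \<delta>) sequentially"
      using order_tendstoD(2)[OF lim_1_over_n \<open>0 < \<delta>\<close>] by simp
    moreover have "eventually (\<lambda>n. 1 \<le> n) sequentially"
      by (rule eventually_ge_at_top)
    ultimately have "eventually (\<lambda>n. real n powr (1 - s) < e \<and> 1 / real n < \<delta> \<and> 1 \<le> n) sequentially"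
      by (simp add: eventually_conj_iff)
    then obtain n where n: "real n powr (1 - s) < e" "1 / real n < \<delta>" "1 \<le> n"
      using eventually_happens'[OF trivial_limit_sequentially] by blast
    have "hausdorff_pre s \<delta> E \<le> ennreal (real n powr (1 - s))"
      using hausdorff_pre_unit_interval_le[OF assms(2) n(3)] n(2) assms(1) by simp
    also have "\<dots> \<le> ennreal e"
      using n(1) by (intro ennreal_leI) simp
    finally show ?thesis .
  qed
  have "hausdorff_pre s \<delta> E \<le> 0" if "0 < \<delta>" for \<delta>
    by (rule ennreal_le_epsilon) (simp add: small that)
  then show ?thesis
    unfolding hausdorff_measure_def by simp
qed

lemma hausdorff_measure_0_nonempty:
  assumes "x \<in> E"
  shows "hausdorff_measure 0 E \<noteq> 0"
proof -
  have "1 \<le> hausdorff_pre 0 1 E"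
    unfolding hausdorff_pre_def
  proof (rule INF_greatest)
    fix U :: "nat \<Rightarrow> real set"
    assume "U \<in> {U. E \<subseteq> (\<Union>i. U i) \<and> (\<forall>i. bounded (U i) \<and> diameter (U i) \<le> 1)}"
    then obtain i where "x \<in> U i"
      using assms by blast
    then have "hcost 0 (U i) = 1"
      unfolding hcost_def by auto
    then show "1 \<le> (\<Sum>i. hcost 0 (U i))"
      using sum_le_suminf[OF summableI, of "{i}" "\<lambda>i. hcost 0 (U i)"] by simp
  qed
  then have "1 \<le> hausdorff_measure 0 E"
    using hausdorff_pre_le_hausdorff_measure[of 1 0 E] by simp
  then show ?thesis
    by auto
qed

lemma hoelder_preimage_subset_interval:
  fixes g :: "real \<Rightarrow> real"
  assumes "0 < s" "0 < C"
    and hoelder: "\<And>y y'. y \<in> Y \<Longrightarrow> y' \<in> Y \<Longrightarrow> \<bar>y - y'\<bar> \<le> C * \<bar>g y - g y'\<bar> powr s"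
    and "bounded U" "z \<in> Y" "g z \<in> U"
  shows "{y \<in> Y. g y \<in> U} \<subseteq> {z - C * diameter U powr s .. z + C * diameter U powr s}"
proof
  fix y
  assume y: "y \<in> {y \<in> Y. g y \<in> U}"
  then have "\<bar>y - z\<bar> \<le> C * \<bar>g y - g z\<bar> powr s"
    using hoelder assms(5) by simp
  also have "\<bar>g y - g z\<bar> \<le> diameter U"
    using diameter_bounded_bound[OF assms(4), of "g y" "g z"] y assms(6) by (simp add: dist_real_def)
  then have "C * \<bar>g y - g z\<bar> powr s \<le> C * diameter U powr s"
    using assms(1,2) by (intro mult_left_mono powr_mono2) auto
  finally show "y \<in> {z - C * diameter U powr s .. z + C * diameter U powr s}"
    by (auto simp: abs_le_iff)
qed

lemma emeasure_le_hausdorff_cover: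
  fixes g :: "real \<Rightarrow> real"
  assumes s: "0 < s" and C: "0 < C" and gY: "g ` Y \<subseteq> E"
    and hoelder: "\<And>y y'. y \<in> Y \<Longrightarrow> y' \<in> Y \<Longrightarrow> \<bar>y - y'\<bar> \<le> C * \<bar>g y - g y'\<bar> powr s"
    and cover: "E \<subseteq> (\<Union>i. U i)" and bounded: "\<And>i. bounded (U i)"
  shows "emeasure lborel Y \<le> ennreal (2 * C) * (\<Sum>i. hcost s (U i))"
proof -
  define V where "V i = {y \<in> Y. g y \<in> U i}" for i
  define r where "r i = C * diameter (U i) powr s" for i
  define W where "W i = (if V i = {} then {} else {(SOME y. y \<in> V i) - r i .. (SOME y. y \<in> V i) + r i})"
    for i
  have VW: "V i \<subseteq> W i" for i
  proof (cases "V i = {}")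
    case False
    define z where "z = (SOME y. y \<in> V i)"
    have "z \<in> V i"
      using False unfolding z_def by (simp add: some_in_eq)
    then have "V i \<subseteq> {z - r i .. z + r i}"
      unfolding V_def r_def by (intro hoelder_preimage_subset_interval[OF s C hoelder bounded]) simp_all
    then show ?thesis
      using False unfolding W_def z_def by simp
  qed simp
  have "Y \<subseteq> (\<Union>i. V i)"
    using cover gY unfolding V_def by blast
  then have "Y \<subseteq> (\<Union>i. W i)"
    using UN_mono[OF subset_refl VW] by (rule order_trans)
  moreover have W: "W i \<in> sets lborel" for i
    unfolding W_def by simp
  then have "(\<Union>i. W i) \<in> sets lborel"
    by blast
  ultimately have "emeasure lborel Y \<le> emeasure lborel (\<Union>i. W i)"
    by (rule emeasure_mono)
  also have "\<dots> \<le> (\<Sum>i. emeasure lborel (W i))"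
    using W by (intro emeasure_subadditive_countably) auto
  also have "\<dots> \<le> (\<Sum>i. ennreal (2 * C) * hcost s (U i))"
  proof (intro suminf_le allI)
    fix i
    show "emeasure lborel (W i) \<le> ennreal (2 * C) * hcost s (U i)"
    proof (cases "V i = {}")
      case False
      then have "U i \<noteq> {}"
        unfolding V_def by auto
      moreover have "0 \<le> r i"
        unfolding r_def using C by simp
      ultimately show ?thesis
        unfolding W_def hcost_def r_def using False C s
        by (simp add: ennreal_mult'[symmetric] mult.assoc)
    qed (simp add: W_def)
  qed auto
  also have "\<dots> = ennreal (2 * C) * (\<Sum>i. hcost s (U i))"
    by (rule ennreal_suminf_cmult)
  finally show ?thesis .
qed

lemma hausdorff_measure_pos_if_inverse_hoelder:
  fixes g :: "real \<Rightarrow> real"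
  assumes "0 < s" "0 < C" "emeasure lborel Y \<noteq> 0" "g ` Y \<subseteq> E"
    and "\<And>y y'. y \<in> Y \<Longrightarrow> y' \<in> Y \<Longrightarrow> \<bar>y - y'\<bar> \<le> C * \<bar>g y - g y'\<bar> powr s"
  shows "hausdorff_measure s E \<noteq> 0"
proof
  assume "hausdorff_measure s E = 0"
  then have "hausdorff_pre s 1 E = 0"
    using hausdorff_pre_le_hausdorff_measure[of 1 s E] by simp
  have "emeasure lborel Y \<le> 0 + ennreal e" if "0 < e" for e
  proof -
    have "hausdorff_pre s 1 E < ennreal (e / (2 * C))"
      using \<open>hausdorff_pre s 1 E = 0\<close> \<open>0 < e\<close> \<open>0 < C\<close> by simp
    then obtain U where U: "E \<subseteq> (\<Union>i. U i)" "\<And>i. bounded (U i)"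
      "(\<Sum>i. hcost s (U i)) < ennreal (e / (2 * C))"
      unfolding hausdorff_pre_def INF_less_iff by blast
    have "emeasure lborel Y \<le> ennreal (2 * C) * (\<Sum>i. hcost s (U i))"
      using emeasure_le_hausdorff_cover[OF assms(1,2,4,5) U(1,2)] .
    also have "\<dots> \<le> ennreal (2 * C) * ennreal (e / (2 * C))"
      using U(3) by (intro mult_left_mono) auto
    also have "\<dots> = ennreal e"
      using \<open>0 < C\<close> \<open>0 < e\<close> by (simp add: ennreal_mult'[symmetric])
    finally show ?thesis
      by simp
  qed
  then have "emeasure lborel Y \<le> 0"
    by (rule ennreal_le_epsilon)
  then show False
    using assms(3) by simp
qed

lemma hausdorff_dim_eqI:
  assumes "0 \<le> d"
    and "\<And>s. d < s \<Longrightarrow> hausdorff_measure s E = 0"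
    and "\<And>s. 0 \<le> s \<Longrightarrow> s < d \<Longrightarrow> hausdorff_measure s E \<noteq> 0"
  shows "hausdorff_dim E = d"
proof -
  define S where "S = {s. 0 \<le> s \<and> hausdorff_measure s E = 0}"
  have "d + 1 \<in> S" "bdd_below S"
    unfolding S_def using assms(1,2) by (auto intro: bdd_belowI[of _ 0])
  moreover have "d \<le> s" if "s \<in> S" for s
    using that assms(3) unfolding S_def by force
  ultimately have "d \<le> Inf S"
    by (intro cInf_greatest) auto
  moreover have "Inf S \<le> d + e" if "0 < e" for e
    using \<open>bdd_below S\<close> assms(1,2) that unfolding S_def by (intro cInf_lower) auto
  ultimately show ?thesis
    unfolding hausdorff_dim_def S_def[symmetric] by (meson antisym field_le_epsilon)
qed

section \<open>A Cantor set of non-matching parameters\<close>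

definition digit_interval :: "nat \<Rightarrow> real set" where
  "digit_interval N = {1 / real N .. real N / (real N + 1)}"

definition digits_below :: "nat \<Rightarrow> nat list \<Rightarrow> bool" where
  "digits_below N w \<longleftrightarrow> (\<forall>d\<in>set w. 1 \<le> d \<and> d + 1 \<le> N)"

lemma digits_below_simps [simp]:
  "digits_below N []"
  "digits_below N (d # w) \<longleftrightarrow> 1 \<le> d \<and> d + 1 \<le> N \<and> digits_below N w"
  "digits_below N (u @ v) \<longleftrightarrow> digits_below N u \<and> digits_below N v"
  unfolding digits_below_def by auto

lemma pos_digits_if_digits_below: "digits_below N w \<Longrightarrow> pos_digits w"
  unfolding digits_below_def pos_digits_def by auto

lemma digit_interval_unit: "N \<ge> 1 \<Longrightarrow> x \<in> digit_interval N \<Longrightarrow> 0 < x \<and> x < 1"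
proof -
  assume N: "N \<ge> 1" and x: "x \<in> digit_interval N"
  have a: "0 < 1 / real N" "real N / (real N + 1) < 1" using N by auto
  have b: "1 / real N \<le> x" "x \<le> real N / (real N + 1)"
    using x unfolding digit_interval_def by auto
  show ?thesis using a b by (intro conjI; linarith)
qed

lemma inverse_branch_mem_digit_interval:
  assumes "N \<ge> 1" "1 \<le> d" "d + 1 \<le> N" "x \<in> digit_interval N"
  shows "1 / (real d + x) \<in> digit_interval N"
proof -
  have x: "1 / real N \<le> x" "x \<le> real N / (real N + 1)"
    using assms(4) unfolding digit_interval_def by auto
  have "real N / (real N + 1) \<le> 1" by simp
  then have x1: "x \<le> 1" using x(2) by linarith
  have d: "1 \<le> real d" "real d + 1 \<le> real N" using assms by auto
  have "0 < 1 / real N" using assms(1) by simp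
  then have xp: "0 < x" using x(1) by linarith
  have lo: "1 / real N \<le> 1 / (real d + x)"
    using d x1 xp by (intro divide_left_mono) auto
  have "1 + 1 / real N \<le> real d + x" using d x(1) by simp
  moreover have "0 \<le> 1 / real N" by simp
  then have "0 < 1 + 1 / real N" by linarith
  moreover have "0 < real d + x" using d xp by auto
  ultimately have "1 / (real d + x) \<le> 1 / (1 + 1 / real N)" by (intro divide_left_mono) auto
  also have "1 / (1 + 1 / real N) = real N / (real N + 1)" using assms(1) by (simp add: field_simps)
  finally show ?thesis using lo unfolding digit_interval_def by simp
qed

lemma cf_branch_mem_digit_interval: "N \<ge> 1 \<Longrightarrow> digits_below N w \<Longrightarrow> x \<in> digit_interval N \<Longrightarrow>
    cf_branch w x \<in> digit_interval N"
  by (induction w) (auto intro: inverse_branch_mem_digit_interval)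

lemma funpow_gauss_map_cf_branch: assumes "N \<ge> 1" "digits_below N w" "x \<in> digit_interval N"
  shows "(gauss_map ^^ length w) (cf_branch w x) = x
      \<and> (\<forall>j\<le>length w. (gauss_map ^^ j) (cf_branch w x) \<in> digit_interval N)"
  using assms(2)
proof (induction w)
  case Nil then show ?case using assms by simp
next
  case (Cons d w)
  have pr: "cf_branch w x \<in> digit_interval N"
    using cf_branch_mem_digit_interval assms Cons by simp
  then have "0 \<le> cf_branch w x" "cf_branch w x < 1"
    using digit_interval_unit assms(1) by fastforce+
  then have g: "gauss_map (1 / (real d + cf_branch w x)) = cf_branch w x"
    using gauss_map_inverse_branch[of d "cf_branch w x"] Cons by simp
  have e: "(gauss_map ^^ Suc j) (cf_branch (d # w) x) = (gauss_map ^^ j) (cf_branch w x)" for j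
    by (simp add: funpow_Suc_right g del: funpow.simps)
  have "(gauss_map ^^ length (d # w)) (cf_branch (d # w) x) = x" using e Cons by simp
  moreover have "(gauss_map ^^ j) (cf_branch (d # w) x) \<in> digit_interval N" if "j \<le> length (d # w)" for j
  proof (cases j)
    case 0 then show ?thesis using cf_branch_mem_digit_interval[of N "d # w" x] assms Cons by simp
  next
    case (Suc i) then show ?thesis using e Cons that by simp
  qed
  ultimately show ?case by blast
qed

lemma digit_interval_digit_gap:
  assumes "1 \<le> N" "X \<in> digit_interval N" "X' \<in> digit_interval N" "d \<noteq> d'"
  shows "1 / (real N + 1) \<le> \<bar>real d' + X' - real d - X\<bar>"
proof -
  have "\<bar>X' - X\<bar> \<le> real N / (real N + 1) - 1 / real N"
    using assms(2,3) unfolding digit_interval_def by auto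
  also have "\<dots> = 1 - 1 / (real N + 1) - 1 / real N"
    using assms(1) by (simp add: field_simps)
  finally have "X' - X \<le> 1 - 1 / (real N + 1) - 1 / real N"
               "X - X' \<le> 1 - 1 / (real N + 1) - 1 / real N"
    by (auto simp: abs_le_iff)
  moreover have "0 \<le> 1 / real N"
    by simp
  moreover have "real d + 1 \<le> real d' \<or> real d' + 1 \<le> real d"
    using assms(4) by (cases "d < d'") auto
  ultimately show ?thesis
    by linarith
qed

lemma dist_inverse_branch_ge:
  assumes "1 \<le> N" "X \<in> digit_interval N" "X' \<in> digit_interval N"
    and "1 \<le> d" "d + 1 \<le> N" "1 \<le> d'" "d' + 1 \<le> N"
  shows "\<bar>real d' + X' - real d - X\<bar> / (real N)\<^sup>2 \<le> \<bar>1 / (real d + X) - 1 / (real d' + X')\<bar>"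
proof -
  have X: "0 < X" "X < 1" "0 < X'" "X' < 1"
    using digit_interval_unit assms(1-3) by auto
  have d: "1 \<le> real d" "real d + 1 \<le> real N" "1 \<le> real d'" "real d' + 1 \<le> real N"
    using assms(4-7) by auto
  have "real d + X \<le> real N" "real d' + X' \<le> real N"
    using d X by linarith+
  then have "(real d + X) * (real d' + X') \<le> real N * real N"
    using X d by (intro mult_mono) auto
  then have den: "(real d + X) * (real d' + X') \<le> (real N)\<^sup>2"
    by (simp add: power2_eq_square)
  have pos: "0 < (real d + X) * (real d' + X')"
    using X d by simp
  have "1 / (real d + X) - 1 / (real d' + X')
      = (real d' + X' - real d - X) / ((real d + X) * (real d' + X'))"
    using X d by (simp add: field_simps)
  moreover have "\<bar>real d' + X' - real d - X\<bar> / (real N)\<^sup>2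
      \<le> \<bar>real d' + X' - real d - X\<bar> / ((real d + X) * (real d' + X'))"
    using den pos by (intro frac_le) auto
  ultimately show ?thesis
    using pos by simp
qed

lemma cf_branch_separated:
  assumes "1 \<le> N"
  shows "digits_below N V \<Longrightarrow> digits_below N V' \<Longrightarrow> length V = length V' \<Longrightarrow> V \<noteq> V' \<Longrightarrow>
    r \<in> digit_interval N \<Longrightarrow> r' \<in> digit_interval N \<Longrightarrow>
    (1 / (real N)\<^sup>2) ^ length V / (real N + 1) \<le> \<bar>cf_branch V r - cf_branch V' r'\<bar>"
proof (induction V arbitrary: V')
  case (Cons d V)
  then obtain d' W where V': "V' = d' # W"
    by (cases V') auto
  define X where "X = cf_branch V r"
  define X' where "X' = cf_branch W r'"
  have X: "X \<in> digit_interval N" "X' \<in> digit_interval N"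
    using cf_branch_mem_digit_interval Cons V' unfolding X_def X'_def by auto
  have dist: "\<bar>real d' + X' - real d - X\<bar> / (real N)\<^sup>2 \<le> \<bar>cf_branch (d # V) r - cf_branch V' r'\<bar>"
    using dist_inverse_branch_ge[OF assms X, of d d'] Cons.prems V' unfolding X_def X'_def by simp
  show ?case
  proof (cases "d = d'")
    case False
    have "1 / (real N)\<^sup>2 \<le> 1"
      using assms by (simp add: field_simps)
    then have "(1 / (real N)\<^sup>2) ^ length V \<le> 1"
      by (intro power_le_one) auto
    then have "(1 / (real N)\<^sup>2) ^ length (d # V) / (real N + 1) \<le> 1 / (real N)\<^sup>2 / (real N + 1)"
      by (simp add: divide_right_mono)
    also have "\<dots> = (1 / (real N + 1)) / (real N)\<^sup>2"
      by (simp add: field_simps)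
    also have "\<dots> \<le> \<bar>real d' + X' - real d - X\<bar> / (real N)\<^sup>2"
      using digit_interval_digit_gap[OF assms X False] by (intro divide_right_mono) auto
    finally show ?thesis
      using dist by simp
  next
    case True
    then have IH: "(1 / (real N)\<^sup>2) ^ length V / (real N + 1) \<le> \<bar>X - X'\<bar>"
      using Cons V' unfolding X_def X'_def by auto
    have "(1 / (real N)\<^sup>2) ^ length (d # V) / (real N + 1)
        = ((1 / (real N)\<^sup>2) ^ length V / (real N + 1)) / (real N)\<^sup>2"
      by (simp add: field_simps)
    also have "\<dots> \<le> \<bar>X - X'\<bar> / (real N)\<^sup>2"
      using IH by (intro divide_right_mono) auto
    finally have "(1 / (real N)\<^sup>2) ^ length (d # V) / (real N + 1) \<le> \<bar>X - X'\<bar> / (real N)\<^sup>2" .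
    then show ?thesis
      using dist True by (simp add: abs_minus_commute)
  qed
qed simp

lemma power_powr: "0 \<le> (x::real) \<Longrightarrow> (x ^ n) powr a = (x powr a) ^ n"
  by (induction n) (auto simp: powr_mult)

lemma funpow_periodic:
  fixes f :: "'a \<Rightarrow> 'a"
  assumes "(f ^^ i) x = (f ^^ j) x" "i \<le> n"
  shows "(f ^^ (n + q * (j - i))) x = (f ^^ n) x"
proof (induction q)
  case (Suc q)
  show ?case
  proof (cases "i \<le> j")
    case True
    have "n + Suc q * (j - i) = (n + q * (j - i) - i) + j"
      using True assms(2) by simp
    then have "(f ^^ (n + Suc q * (j - i))) x = (f ^^ (n + q * (j - i) - i)) ((f ^^ i) x)"
      using assms(1) by (simp add: funpow_add)
    also have "\<dots> = (f ^^ (n + q * (j - i) - i + i)) x"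
      by (simp add: funpow_add)
    also have "\<dots> = (f ^^ (n + q * (j - i))) x"
      using assms(2) by simp
    finally show ?thesis
      using Suc by simp
  qed (use Suc in simp)
qed simp

text \<open>
  The interval \<open>[0, 1)\<close> is cut into \<open>n_blocks\<close> consecutive pieces, the \<open>i\<close>-th of length
  \<open>weight i\<close>, proportional to \<open>cylinder_length (block i) powr s\<close>; \<open>shift\<close> maps the piece
  containing \<open>y\<close> affinely onto \<open>[0, 1)\<close>, and \<open>code j y\<close> is the piece containing the
  \<open>j\<close>-th iterate. \<open>coded_point y\<close> is the continued fraction whose digits are the blocks
  \<open>block (code 0 y)\<close>, \<open>block (code 1 y)\<close>, \<open>\<dots>\<close> Assuming a total weight of at least 2
  absorbs the factor 2 lost in \<open>cylinder_length_append\<close>.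
\<close>
locale block_coding =
  fixes N l :: nat and s :: real
  assumes N_ge_3: "3 \<le> N" and l_pos: "1 \<le> l" and s_pos: "0 < s" and s_less_1: "s < 1"
    and block_weights_ge_2: "2
        \<le> sum_list (map (\<lambda>v. cylinder_length v powr s) (digit_words (N - 1) l))"
begin

definition "blocks = digit_words (N - 1) l"
definition "n_blocks = length blocks"
definition "block i = blocks ! i"
definition "total_weight = sum_list (map (\<lambda>v. cylinder_length v powr s) blocks)"
definition "weight i = cylinder_length (block i) powr s / total_weight"
definition "cum_weight i = (\<Sum>j<i. weight j)"
definition "block_index y = (LEAST i. y < cum_weight (Suc i))"
definition "shift y = (y - cum_weight (block_index y)) / weight (block_index y)"
definition "code j y = block_index ((shift ^^ j) y)"
definition "code_word k y = concat (map (\<lambda>j. block (code j y)) [0..<k])"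
definition "code_mass k y = (\<Prod>j<k. weight (code j y))"

lemma N1: "1 \<le> N" using N_ge_3 by simp

lemma block_props: "i < n_blocks \<Longrightarrow>
    length (block i) = l \<and> digits_below N (block i) \<and> pos_digits (block i)"
proof -
  assume "i < n_blocks"
  then have "block i \<in> set (digit_words (N - 1) l)"
    unfolding block_def n_blocks_def blocks_def by simp
  then have h: "length (block i) = l" "\<forall>d\<in>set (block i). 1 \<le> d \<and> d \<le> N - 1"
    using mem_digit_words_iff by blast+
  then have "digits_below N (block i)" unfolding digits_below_def using N_ge_3 by auto
  then show ?thesis using h pos_digits_if_digits_below by blast
qed

lemma n_blocks_pos: "1 \<le> n_blocks"
proof -
  have "blocks \<noteq> []" unfolding blocks_def using N_ge_3 by (intro digit_words_nonempty) simp
  then show ?thesis unfolding n_blocks_def by (cases blocks) auto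
qed

lemma block_inj: "i < n_blocks \<Longrightarrow> j < n_blocks \<Longrightarrow> block i = block j \<Longrightarrow> i = j"
  unfolding block_def n_blocks_def using distinct_digit_words[of "N - 1" l] N_ge_3 nth_eq_iff_index_eq unfolding blocks_def
  by fastforce

lemma total_weight_eq: "total_weight = (\<Sum>i<n_blocks. cylinder_length (block i) powr s)"
  unfolding total_weight_def n_blocks_def block_def by (simp add: sum_list_sum_nth atLeast0LessThan)

lemma total_weight_ge_2: "2 \<le> total_weight"
  using block_weights_ge_2 unfolding total_weight_def blocks_def .

lemma weight_nonneg: "0 \<le> weight i" unfolding weight_def using total_weight_ge_2 by simp

lemma weight_pos: "i < n_blocks \<Longrightarrow> 0 < weight i"
proof -
  assume "i < n_blocks"
  then have "pos_digits (block i)" using block_props by blast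
  then have "0 < cylinder_length (block i)" by (rule cylinder_length_pos)
  then have "0 < cylinder_length (block i) powr s" by simp
  moreover have "0 < total_weight" using total_weight_ge_2 by simp
  ultimately show ?thesis unfolding weight_def by simp
qed

lemma cum_weight_Suc: "cum_weight (Suc i) = cum_weight i + weight i"
  unfolding cum_weight_def by simp
lemma cum_weight_0: "cum_weight 0 = 0" unfolding cum_weight_def by simp
lemma cum_weight_n_blocks: "cum_weight n_blocks = 1"
proof -
  have "cum_weight n_blocks = (\<Sum>j<n_blocks. cylinder_length (block j) powr s) / total_weight"
    unfolding cum_weight_def weight_def by (simp add: sum_divide_distrib)
  then show ?thesis using total_weight_eq total_weight_ge_2 by simp
qed

lemma block_index_props:
  assumes "0 \<le> y" "y < 1"
  shows "block_index y < n_blocks" "cum_weight (block_index y) \<le> y"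
        "y < cum_weight (block_index y) + weight (block_index y)"
proof -
  have ex: "y < cum_weight (Suc (n_blocks - 1))"
    using n_blocks_pos cum_weight_n_blocks assms by simp
  have l: "y < cum_weight (Suc (block_index y))"
    unfolding block_index_def by (rule LeastI[of _ "n_blocks - 1"]) (rule ex)
  have "block_index y \<le> n_blocks - 1" unfolding block_index_def by (rule Least_le) (rule ex)
  then show "block_index y < n_blocks" using n_blocks_pos by simp
  show "y < cum_weight (block_index y) + weight (block_index y)" using l cum_weight_Suc by simp
  show "cum_weight (block_index y) \<le> y"
  proof (cases "block_index y")
    case 0 then show ?thesis using cum_weight_0 assms by simp
  next
    case (Suc i)
    then have "i < block_index y" by simp
    then have "\<not> y < cum_weight (Suc i)" unfolding block_index_def by (rule not_less_Least)
    then show ?thesis using Suc by simp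
  qed
qed

lemma shift_props:
  assumes "0 \<le> y" "y < 1"
  shows "0 \<le> shift y" "shift y < 1"
        "y = cum_weight (block_index y) + weight (block_index y) * shift y"
proof -
  have i: "block_index y < n_blocks" "cum_weight (block_index y) \<le> y"
          "y < cum_weight (block_index y) + weight (block_index y)"
    using block_index_props assms by auto
  have pp: "0 < weight (block_index y)" using weight_pos i by simp
  show "0 \<le> shift y" unfolding shift_def using i pp by simp
  show "shift y < 1" unfolding shift_def using i pp by (simp add: field_simps)
  show "y = cum_weight (block_index y) + weight (block_index y) * shift y"
    unfolding shift_def using pp by simp
qed

lemma funpow_shift_unit:
  assumes "0 \<le> y" "y < 1"
  shows "0 \<le> (shift ^^ j) y \<and> (shift ^^ j) y < 1"
  by (induction j) (use assms shift_props in auto)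

lemma code_Suc: "code (Suc j) y = code j (shift y)"
  unfolding code_def by (simp add: funpow_Suc_right del: funpow.simps)

lemma code_0: "code 0 y = block_index y" unfolding code_def by simp

lemma code_funpow_shift: "code j ((shift ^^ k) y) = code (j + k) y"
  unfolding code_def by (simp add: funpow_add)

lemma code_less: "0 \<le> y \<Longrightarrow> y < 1 \<Longrightarrow> code j y < n_blocks"
  unfolding code_def using block_index_props funpow_shift_unit by blast

lemma code_word_Suc: "code_word (Suc k) y = code_word k y @ block (code k y)"
  unfolding code_word_def by simp

lemma code_word_Suc': "code_word (Suc k) y = block (code 0 y) @ code_word k (shift y)"
proof -
  have "[0..<Suc k] = 0 # map Suc [0..<k]" by (simp add: map_Suc_upt upt_conv_Cons)
  then show ?thesis unfolding code_word_def by (simp add: code_Suc comp_def)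
qed

lemma code_word_props:
  assumes "0 \<le> y" "y < 1"
  shows "digits_below N (code_word k y) \<and> length (code_word k y) = k * l
      \<and> pos_digits (code_word k y)"
proof (induction k)
  case 0 then show ?case unfolding code_word_def by simp
next
  case (Suc k)
  have "code k y < n_blocks" using code_less assms by simp
  then have "length (block (code k y)) = l" "digits_below N (block (code k y))"
    using block_props by auto
  then show ?case using Suc pos_digits_if_digits_below unfolding code_word_Suc by auto
qed

lemma code_word_cong: "(\<And>j. j < k \<Longrightarrow> code j y = code j y') \<Longrightarrow> code_word k y = code_word k y'"
  unfolding code_word_def by (intro arg_cong[where f = concat] map_cong) auto

lemma code_mass_Suc: "code_mass (Suc k) y = code_mass k y * weight (code k y)"
  unfolding code_mass_def by simp
lemma code_mass_Suc': "code_mass (Suc k) y = weight (code 0 y) * code_mass k (shift y)"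
  unfolding code_mass_def by (subst prod.lessThan_Suc_shift) (simp add: code_Suc)

lemma dist_le_code_mass: "0 \<le> y \<Longrightarrow> y < 1 \<Longrightarrow> 0 \<le> y' \<Longrightarrow> y' < 1 \<Longrightarrow> (\<And>j. j < k \<Longrightarrow> code j y = code j y') \<Longrightarrow>
   \<bar>y - y'\<bar> \<le> code_mass k y"
proof (induction k arbitrary: y y')
  case 0 then show ?case unfolding code_mass_def by simp
next
  case (Suc k)
  have i: "block_index y = block_index y'" using Suc.prems(5)[of 0] by (simp add: code_0)
  have e: "y = cum_weight (block_index y) + weight (block_index y) * shift y"
          "y' = cum_weight (block_index y) + weight (block_index y) * shift y'"
    using shift_props Suc.prems i by metis+
  have h: "code j (shift y) = code j (shift y')" if "j < k" for j
  proof -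
    have "code (Suc j) y = code (Suc j) y'" using Suc.prems(5) that by simp
    then show ?thesis by (simp add: code_Suc)
  qed
  have "\<bar>shift y - shift y'\<bar> \<le> code_mass k (shift y)"
    using Suc.IH[of "shift y" "shift y'"] shift_props Suc.prems h by simp
  then have "weight (block_index y) * \<bar>shift y - shift y'\<bar>
      \<le> weight (block_index y) * code_mass k (shift y)"
    using weight_nonneg by (intro mult_left_mono) auto
  moreover have "\<bar>y - y'\<bar> = weight (block_index y) * \<bar>shift y - shift y'\<bar>"
  proof -
    have "y - y' = weight (block_index y) * (shift y - shift y')"
      using e by (simp add: algebra_simps)
    then show ?thesis using weight_nonneg by (simp add: abs_mult)
  qed
  ultimately show ?case using code_mass_Suc' code_0 by simp
qed

lemma code_mass_le:
  assumes "0 \<le> y" "y < 1"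
  shows "code_mass k y \<le> cylinder_length (code_word k y) powr s"
proof (induction k)
  case 0 then show ?case unfolding code_mass_def code_word_def by (simp add: cylinder_length_def)
next
  case (Suc k)
  define B where "B = block (code k y)"
  have Bp: "pos_digits B" using block_props code_less assms unfolding B_def by blast
  have Wp: "pos_digits (code_word k y)" using code_word_props assms by blast
  have "code_mass (Suc k) y = code_mass k y * (cylinder_length B powr s / total_weight)"
    unfolding code_mass_Suc weight_def B_def by simp
  also have "\<dots> \<le> cylinder_length (code_word k y) powr s * (cylinder_length B powr s / total_weight)"
    using Suc total_weight_ge_2 by (intro mult_right_mono) auto
  also have "\<dots> \<le> cylinder_length (code_word k y) powr s * (cylinder_length B powr s / 2 powr s)"
  proof -
    have "2 powr s \<le> 2 powr 1" using s_less_1 by (intro powr_mono) auto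
    then have "2 powr s \<le> total_weight" using total_weight_ge_2 by simp
    moreover have "0 < total_weight * 2 powr s" using total_weight_ge_2 by simp
    ultimately have "cylinder_length B powr s / total_weight \<le> cylinder_length B powr s / 2 powr s"
      by (intro divide_left_mono) auto
    then show ?thesis by (intro mult_left_mono) auto
  qed
  also have "\<dots> = (cylinder_length (code_word k y) * cylinder_length B / 2) powr s"
    using cylinder_length_pos[OF Wp] cylinder_length_pos[OF Bp] by (simp add: powr_mult powr_divide)
  also have "\<dots> \<le> cylinder_length (code_word k y @ B) powr s"
    using cylinder_length_append[OF Wp Bp] cylinder_length_pos[OF Wp] cylinder_length_pos[OF Bp] s_pos
    by (intro powr_mono2) auto
  finally show ?case unfolding code_word_Suc B_def .
qed

lemma code_mass_le_power:
  assumes "0 \<le> y" "y < 1"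
  shows "code_mass k y \<le> ((1/2) powr s) ^ k"
proof -
  have Wp: "pos_digits (code_word k y)" and len: "length (code_word k y) = k * l"
    using code_word_props assms by auto
  have "cylinder_length (code_word k y) \<le> (1/2) ^ (k * l)"
    using cylinder_length_le_power[OF Wp] len by simp
  also have "\<dots> \<le> (1/2) ^ k" using l_pos by (intro power_decreasing) auto
  finally have "cylinder_length (code_word k y) powr s \<le> ((1/2) ^ k) powr s"
    using cylinder_length_pos[OF Wp] s_pos by (intro powr_mono2) auto
  also have "\<dots> = ((1/2) powr s) ^ k" by (simp add: power_powr)
  finally show ?thesis using code_mass_le[OF assms, of k] by simp
qed

lemma eq_if_code_eq: assumes "0 \<le> y" "y < 1" "0 \<le> y'" "y' < 1"
                             "\<And>j. code j y = code j y'"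
  shows "y = y'"
proof -
  have "\<bar>y - y'\<bar> \<le> 0"
  proof (rule field_le_epsilon)
    fix e :: real assume e: "0 < e"
    have "(1/2) powr s < 1 powr s" using s_pos by (intro powr_less_mono2) auto
    then have "(1/2) powr s < 1" by simp
    then obtain k where k: "((1/2) powr s) ^ k < e" using real_arch_pow_inv[OF e] by blast
    have "\<bar>y - y'\<bar> \<le> code_mass k y" using dist_le_code_mass assms by blast
    also have "\<dots> \<le> ((1/2) powr s) ^ k" using code_mass_le_power assms by blast
    finally show "\<bar>y - y'\<bar> \<le> 0 + e" using k by simp
  qed
  then show ?thesis by simp
qed

definition "base_point = 1 / real N"
definition "approx k y = cf_branch (code_word k y) base_point"
definition "coded_point y = lim (\<lambda>k. approx k y)"
definition "gap = (1 / (real N)\<^sup>2) ^ l / (real N + 1)"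

lemma digit_interval_unit': "x \<in> digit_interval N \<Longrightarrow> 0 < x \<and> x < 1"
  using digit_interval_unit N1 by blast

lemma base_point_mem: "base_point \<in> digit_interval N"
proof -
  have n3: "3 \<le> real N" using N_ge_3 by simp
  have "3 * real N \<le> real N * real N" using n3 by (intro mult_right_mono) auto
  then have "real N + 1 \<le> real N * real N" using n3 by linarith
  then have "1 / real N \<le> real N / (real N + 1)" using N_ge_3 by (simp add: field_simps)
  then show ?thesis unfolding base_point_def digit_interval_def by simp
qed

lemma approx_mem: "0 \<le> y \<Longrightarrow> y < 1 \<Longrightarrow> approx k y \<in> digit_interval N"
  unfolding approx_def using cf_branch_mem_digit_interval[OF N1] code_word_props base_point_mem
  by blast

lemma dist_approx_Suc:
  assumes "0 \<le> y" "y < 1"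
  shows "\<bar>approx (Suc k) y - approx k y\<bar> \<le> 2 * (1/2) ^ k"
proof -
  define B where "B = block (code k y)"
  have Bd: "digits_below N B" using block_props code_less assms unfolding B_def by blast
  have Wp: "pos_digits (code_word k y)" and len: "length (code_word k y) = k * l"
    using code_word_props assms by auto
  have a: "cf_branch B base_point \<in> digit_interval N"
    using cf_branch_mem_digit_interval[OF N1 Bd base_point_mem] .
  have a01: "0 < cf_branch B base_point" "cf_branch B base_point < 1" "0 < base_point"
            "base_point < 1"
    using digit_interval_unit' a base_point_mem by auto
  have "approx (Suc k) y = cf_branch (code_word k y) (cf_branch B base_point)"
    unfolding approx_def code_word_Suc B_def cf_branch_append ..
  then have "\<bar>approx (Suc k) y - approx k y\<bar>
      \<le> 2 * cylinder_length (code_word k y) * \<bar>cf_branch B base_point - base_point\<bar>"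
    unfolding approx_def using dist_cf_branch_upper[OF Wp] a01 by simp
  also have "\<dots> \<le> 2 * cylinder_length (code_word k y) * 1"
    using a01 cylinder_length_pos[OF Wp] by (intro mult_left_mono) auto
  also have "cylinder_length (code_word k y) \<le> (1/2) ^ k"
  proof -
    have "cylinder_length (code_word k y) \<le> (1/2) ^ (k * l)"
      using cylinder_length_le_power[OF Wp] len by simp
    also have "\<dots> \<le> (1/2) ^ k" using l_pos by (intro power_decreasing) auto
    finally show ?thesis .
  qed
  finally show ?thesis by simp
qed

lemma approx_tendsto:
  assumes "0 \<le> y" "y < 1"
  shows "(\<lambda>k. approx k y) \<longlonglongrightarrow> coded_point y"
proof -
  define f where "f k = approx (Suc k) y - approx k y" for k
  have "summable (\<lambda>k. 2 * (1/2::real) ^ k)" by (intro summable_mult summable_geometric) simp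
  then have sf: "summable f"
    by (rule summable_comparison_test'[where N = 0]) (use dist_approx_Suc assms in \<open>simp add: f_def\<close>)
  have "(\<lambda>n. sum f {..<n}) \<longlonglongrightarrow> suminf f"
    by (rule summable_LIMSEQ[OF sf])
  then have "(\<lambda>n. approx 0 y + sum f {..<n}) \<longlonglongrightarrow> approx 0 y + suminf f"
    by (intro tendsto_add) auto
  moreover have "approx 0 y + sum f {..<n} = approx n y" for n
    unfolding f_def using sum_lessThan_telescope[of "\<lambda>k. approx k y" n] by simp
  ultimately have "(\<lambda>n. approx n y) \<longlonglongrightarrow> approx 0 y + suminf f" by simp
  then have "convergent (\<lambda>k. approx k y)" unfolding convergent_def by blast
  then show ?thesis unfolding coded_point_def by (simp add: convergent_LIMSEQ_iff)
qed

lemma coded_point_mem: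
  assumes "0 \<le> y" "y < 1"
  shows "coded_point y \<in> digit_interval N"
proof -
  have "1 / real N \<le> coded_point y" using approx_tendsto[OF assms] approx_mem[OF assms]
    by (intro LIMSEQ_le_const) (auto simp: digit_interval_def)
  moreover have "coded_point y \<le> real N / (real N + 1)"
    using approx_tendsto[OF assms] approx_mem[OF assms]
    by (intro LIMSEQ_le_const2) (auto simp: digit_interval_def)
  ultimately show ?thesis unfolding digit_interval_def by simp
qed

lemma coded_point_Cons:
  assumes "0 \<le> y" "y < 1"
  shows "coded_point y = cf_branch (block (code 0 y)) (coded_point (shift y))"
proof -
  have Ly: "0 \<le> shift y" "shift y < 1" using shift_props assms by auto
  define B where "B = block (code 0 y)"
  have Bp: "pos_digits B" using block_props code_less assms unfolding B_def by blast
  have e: "approx (Suc k) y = cf_branch B (approx k (shift y))" for k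
    unfolding approx_def code_word_Suc' B_def cf_branch_append ..
  have "(\<lambda>k. approx (Suc k) y) \<longlonglongrightarrow> coded_point y"
    using approx_tendsto[OF assms] by (rule LIMSEQ_Suc)
  moreover have "(\<lambda>k. cf_branch B (approx k (shift y))) \<longlonglongrightarrow> cf_branch B (coded_point (shift y))"
    using cf_branch_tendsto[OF Bp approx_tendsto[OF Ly]] approx_mem[OF Ly] coded_point_mem[OF Ly] digit_interval_unit'
    by (meson less_imp_le)
  ultimately show ?thesis unfolding e B_def by (rule LIMSEQ_unique)
qed

lemma coded_point_code_word: "0 \<le> y \<Longrightarrow> y < 1 \<Longrightarrow>
    coded_point y = cf_branch (code_word k y) (coded_point ((shift ^^ k) y))"
proof (induction k arbitrary: y)
  case 0 then show ?case unfolding code_word_def by simp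
next
  case (Suc k)
  have Ly: "0 \<le> shift y" "shift y < 1" using shift_props Suc.prems by auto
  have "coded_point y = cf_branch (block (code 0 y)) (coded_point (shift y))"
    using coded_point_Cons Suc.prems by simp
  also have "coded_point (shift y)
      = cf_branch (code_word k (shift y)) (coded_point ((shift ^^ k) (shift y)))"
    using Suc.IH Ly by simp
  finally show ?case
    unfolding code_word_Suc' cf_branch_append by (simp add: funpow_Suc_right del: funpow.simps)
qed

lemma funpow_gauss_map_coded_point: assumes "0 \<le> y" "y < 1"
  shows "(gauss_map ^^ (k * l)) (coded_point y) = coded_point ((shift ^^ k) y)"
        "(gauss_map ^^ j) (coded_point y) \<in> digit_interval N"
proof -
  have Lk: "0 \<le> (shift ^^ k) y" "(shift ^^ k) y < 1" using funpow_shift_unit assms by auto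
  have Wd: "digits_below N (code_word k y)" "length (code_word k y) = k * l"
    using code_word_props assms by auto
  have g: "(gauss_map ^^ length (code_word k y)) (cf_branch (code_word k y) (coded_point ((shift ^^ k) y))) = coded_point ((shift ^^ k) y)"
    "\<forall>j\<le>length (code_word k y). (gauss_map ^^ j) (cf_branch (code_word k y) (coded_point ((shift ^^ k) y))) \<in> digit_interval N"
    using funpow_gauss_map_cf_branch[OF N1 Wd(1) coded_point_mem[OF Lk]] by auto
  show "(gauss_map ^^ (k * l)) (coded_point y) = coded_point ((shift ^^ k) y)"
    using g(1) Wd(2) coded_point_code_word[OF assms, of k] by simp
  have "(gauss_map ^^ j) (cf_branch (code_word j y) (coded_point ((shift ^^ j) y))) \<in> digit_interval N"
  proof -
    have Wj: "digits_below N (code_word j y)" "length (code_word j y) = j * l"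
      using code_word_props assms by auto
    have Lj': "0 \<le> (shift ^^ j) y" "(shift ^^ j) y < 1" using funpow_shift_unit assms by auto
    have "j \<le> length (code_word j y)" using Wj(2) l_pos by simp
    then show ?thesis using funpow_gauss_map_cf_branch[OF N1 Wj(1) coded_point_mem[OF Lj']] by blast
  qed
  then show "(gauss_map ^^ j) (coded_point y) \<in> digit_interval N"
    using coded_point_code_word[OF assms, of j] by simp
qed

lemma gap_pos: "0 < gap" unfolding gap_def using N_ge_3 by simp

lemma coded_point_gap: assumes y: "0 \<le> y" "y < 1" and y': "0 \<le> y'" "y' < 1"
  and eq: "\<And>j. j < k \<Longrightarrow> code j y = code j y'" and ne: "code k y \<noteq> code k y'"
  shows "gap * cylinder_length (code_word k y) / 2 \<le> \<bar>coded_point y - coded_point y'\<bar>"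
proof -
  have Wc: "code_word k y = code_word k y'" using code_word_cong eq by blast
  have Wp: "pos_digits (code_word k y)" using code_word_props y by blast
  have Lk: "0 \<le> (shift ^^ k) y" "(shift ^^ k) y < 1" "0 \<le> (shift ^^ k) y'"
           "(shift ^^ k) y' < 1"
    using funpow_shift_unit y y' by auto
  define z where "z = coded_point ((shift ^^ k) y)"
  define z' where "z' = coded_point ((shift ^^ k) y')"
  have zR: "z \<in> digit_interval N" "z' \<in> digit_interval N"
    unfolding z_def z'_def using coded_point_mem Lk by auto
  have z01: "0 \<le> z" "z \<le> 1" "0 \<le> z'" "z' \<le> 1"
    using digit_interval_unit' zR by (meson less_imp_le)+
  have L1: "0 \<le> shift ((shift ^^ k) y)" "shift ((shift ^^ k) y) < 1"
           "0 \<le> shift ((shift ^^ k) y')" "shift ((shift ^^ k) y') < 1"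
    using shift_props Lk by auto
  have zz: "z = cf_branch (block (code k y)) (coded_point (shift ((shift ^^ k) y)))"
           "z' = cf_branch (block (code k y')) (coded_point (shift ((shift ^^ k) y')))"
    unfolding z_def z'_def using coded_point_Cons Lk code_funpow_shift[of 0 k] by auto
  have sk: "code k y < n_blocks" "code k y' < n_blocks" using code_less y y' by auto
  have bne: "block (code k y) \<noteq> block (code k y')" using block_inj sk ne by blast
  have bp: "digits_below N (block (code k y))" "digits_below N (block (code k y'))"
           "length (block (code k y)) = l" "length (block (code k y')) = l"
    using block_props sk by auto
  have "gap \<le> \<bar>z - z'\<bar>" unfolding zz gap_def
    using cf_branch_separated[OF N1 bp(1,2)] bp(3,4) bne coded_point_mem L1 by simp
  have "\<bar>z - z'\<bar> * cylinder_length (code_word k y) / 2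
      \<le> \<bar>cf_branch (code_word k y) z - cf_branch (code_word k y) z'\<bar>"
    using dist_cf_branch_lower[OF Wp] z01 by simp
  moreover have "gap * cylinder_length (code_word k y) / 2
      \<le> \<bar>z - z'\<bar> * cylinder_length (code_word k y) / 2"
    using \<open>gap \<le> \<bar>z - z'\<bar>\<close> cylinder_length_pos[OF Wp]
    by (simp add: divide_right_mono mult_right_mono)
  moreover have "coded_point y = cf_branch (code_word k y) z"
    using coded_point_code_word[OF y, of k] unfolding z_def by simp
  moreover have "coded_point y' = cf_branch (code_word k y) z'"
    using coded_point_code_word[OF y', of k] Wc unfolding z'_def by simp
  ultimately show ?thesis by simp
qed

lemma code_eq_if_coded_point_eq:
  assumes "0 \<le> y" "y < 1" "0 \<le> y'" "y' < 1" "coded_point y = coded_point y'"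
  shows "code j y = code j y'"
proof (rule ccontr)
  assume "code j y \<noteq> code j y'"
  then have ex: "\<exists>k. code k y \<noteq> code k y'" by blast
  define k where "k = (LEAST k. code k y \<noteq> code k y')"
  have kn: "code k y \<noteq> code k y'" unfolding k_def using LeastI_ex[OF ex] .
  have ke: "\<And>j. j < k \<Longrightarrow> code j y = code j y'"
    unfolding k_def using not_less_Least by blast
  have "gap * cylinder_length (code_word k y) / 2 \<le> \<bar>coded_point y - coded_point y'\<bar>"
    using coded_point_gap assms ke kn by blast
  moreover have "0 < gap * cylinder_length (code_word k y) / 2"
    using gap_pos cylinder_length_pos code_word_props assms by simp
  ultimately show False using assms by simp
qed

lemma dist_le_coded_point: assumes "0 \<le> y" "y < 1" "0 \<le> y'" "y' < 1"
  shows "\<bar>y - y'\<bar> \<le> (2 / gap) powr s * \<bar>coded_point y - coded_point y'\<bar> powr s"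
proof (cases "\<forall>j. code j y = code j y'")
  case True
  then have "y = y'" using eq_if_code_eq assms by blast
  then show ?thesis by simp
next
  case False
  then have ex: "\<exists>k. code k y \<noteq> code k y'" by blast
  define k where "k = (LEAST k. code k y \<noteq> code k y')"
  have kn: "code k y \<noteq> code k y'" unfolding k_def using LeastI_ex[OF ex] .
  have ke: "\<And>j. j < k \<Longrightarrow> code j y = code j y'"
    unfolding k_def using not_less_Least by blast
  have g: "gap * cylinder_length (code_word k y) / 2 \<le> \<bar>coded_point y - coded_point y'\<bar>"
    using coded_point_gap assms ke kn by blast
  have Wp: "pos_digits (code_word k y)" using code_word_props assms by blast
  have "cylinder_length (code_word k y) \<le> 2 / gap * \<bar>coded_point y - coded_point y'\<bar>"
    using g gap_pos by (simp add: field_simps)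
  then have "cylinder_length (code_word k y) powr s
      \<le> (2 / gap * \<bar>coded_point y - coded_point y'\<bar>) powr s"
    using cylinder_length_pos[OF Wp] s_pos by (intro powr_mono2) auto
  also have "\<dots> = (2 / gap) powr s * \<bar>coded_point y - coded_point y'\<bar> powr s"
    using gap_pos by (intro powr_mult)
  finally have "cylinder_length (code_word k y) powr s
      \<le> (2 / gap) powr s * \<bar>coded_point y - coded_point y'\<bar> powr s" .
  moreover have "\<bar>y - y'\<bar> \<le> code_mass k y" using dist_le_code_mass assms ke by blast
  moreover have "code_mass k y \<le> cylinder_length (code_word k y) powr s"
    using code_mass_le assms by blast
  ultimately show ?thesis by linarith
qed

text \<open>
  \<open>coded_alpha y = [0; 1, N, \<dots>]\<close>: its first Gauss iterate \<open>1 / (N + coded_point y)\<close> lies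
  below all later ones, which stay in \<open>digit_interval N\<close>.
\<close>

definition "coded_alpha y = cf_branch [1, N] (coded_point y)"
definition "periodic_codes = {y \<in> {0..<1}. \<exists>p per. 0 < per \<and> (\<forall>n\<ge>p. code (n + per) y = code n y)}"
definition "hoelder_const = (2 / gap) powr s * (2 / cylinder_length [1, N]) powr s"

lemma pos_digits_1_N: "pos_digits [1, N]" using N_ge_3 by simp

lemma hoelder_const_pos: "0 < hoelder_const"
  unfolding hoelder_const_def using gap_pos cylinder_length_pos[OF pos_digits_1_N] by simp

lemma dist_le_coded_alpha: assumes "0 \<le> y" "y < 1" "0 \<le> y'" "y' < 1"
  shows "\<bar>y - y'\<bar> \<le> hoelder_const * \<bar>coded_alpha y - coded_alpha y'\<bar> powr s"
proof -
  have b: "0 \<le> coded_point y" "coded_point y \<le> 1" "0 \<le> coded_point y'"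
          "coded_point y' \<le> 1"
    using coded_point_mem digit_interval_unit' assms by (meson less_imp_le)+
  have j: "0 < cylinder_length [1, N]" using cylinder_length_pos[OF pos_digits_1_N] .
  have "\<bar>coded_point y - coded_point y'\<bar> * cylinder_length [1, N] / 2
      \<le> \<bar>coded_alpha y - coded_alpha y'\<bar>"
    unfolding coded_alpha_def using dist_cf_branch_lower[OF pos_digits_1_N b] .
  then have "\<bar>coded_point y - coded_point y'\<bar>
      \<le> 2 / cylinder_length [1, N] * \<bar>coded_alpha y - coded_alpha y'\<bar>"
    using j by (simp add: field_simps)
  then have "\<bar>coded_point y - coded_point y'\<bar> powr s
      \<le> (2 / cylinder_length [1, N] * \<bar>coded_alpha y - coded_alpha y'\<bar>) powr s"
    using s_pos by (intro powr_mono2) auto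
  also have "\<dots> = (2 / cylinder_length [1, N]) powr s * \<bar>coded_alpha y - coded_alpha y'\<bar> powr s"
    using j by (intro powr_mult)
  finally have "(2 / gap) powr s * \<bar>coded_point y - coded_point y'\<bar> powr s
      \<le> (2 / gap) powr s * ((2 / cylinder_length [1, N]) powr s * \<bar>coded_alpha y - coded_alpha y'\<bar> powr s)"
    by (intro mult_left_mono) auto
  then show ?thesis
    using dist_le_coded_point[OF assms] unfolding hoelder_const_def by (simp add: mult.assoc)
qed

lemma periodic_codes_if_funpow_gauss_map_eq:
  assumes y: "0 \<le> y" "y < 1"
    and eq: "(gauss_map ^^ i) (coded_point y) = (gauss_map ^^ j) (coded_point y)" and "i < j"
  shows "y \<in> periodic_codes"
proof -
  have periodic: "code (n + (j - i)) y = code n y" if "i \<le> n" for n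
  proof -
    have "n * 1 \<le> n * l"
      using l_pos by (rule mult_le_mono2)
    then have "i \<le> n * l"
      using that by linarith
    then have "(gauss_map ^^ (n * l + l * (j - i))) (coded_point y)
        = (gauss_map ^^ (n * l)) (coded_point y)"
      using funpow_periodic[OF eq] by blast
    moreover have "n * l + l * (j - i) = (n + (j - i)) * l"
      by (simp add: algebra_simps)
    ultimately have "coded_point ((shift ^^ (n + (j - i))) y) = coded_point ((shift ^^ n) y)"
      using funpow_gauss_map_coded_point(1)[OF y, of "n + (j - i)"]
        funpow_gauss_map_coded_point(1)[OF y, of n] by simp
    then have "code 0 ((shift ^^ (n + (j - i))) y) = code 0 ((shift ^^ n) y)"
      using code_eq_if_coded_point_eq funpow_shift_unit[OF y] by blast
    then show ?thesis
      using code_funpow_shift[of 0] by simp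
  qed
  have "\<exists>p per. 0 < per \<and> (\<forall>n\<ge>p. code (n + per) y = code n y)"
  proof (intro exI conjI)
    show "0 < j - i"
      using \<open>i < j\<close> by simp
    show "\<forall>n\<ge>i. code (n + (j - i)) y = code n y"
      using periodic by blast
  qed
  then show ?thesis
    unfolding periodic_codes_def using y by simp
qed

lemma coded_alpha_gauss_orbit:
  assumes "0 \<le> y" "y < 1"
  shows "1/2 < coded_alpha y" "coded_alpha y < 1"
    and "gauss_map (coded_alpha y) = 1 / (real N + coded_point y)"
    and "(gauss_map ^^ Suc (Suc j)) (coded_alpha y) = (gauss_map ^^ j) (coded_point y)"
proof -
  define b where "b = coded_point y"
  define t where "t = 1 / (real N + b)"
  have b: "0 < b" "b < 1"
    using digit_interval_unit' coded_point_mem[OF assms] unfolding b_def by auto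
  then have t: "0 < t" "t < 1"
    using N_ge_3 unfolding t_def by auto
  have a: "coded_alpha y = 1 / (1 + t)"
    unfolding coded_alpha_def t_def b_def by simp
  moreover have "1/2 < 1 / (1 + t)" "1 / (1 + t) < 1"
    using t by (auto simp: field_simps)
  ultimately show "1/2 < coded_alpha y" "coded_alpha y < 1"
    by simp_all
  show g1: "gauss_map (coded_alpha y) = 1 / (real N + coded_point y)"
    unfolding a using gauss_map_inverse_branch[of 1 t] t unfolding t_def b_def by simp
  have "gauss_map t = b"
    unfolding t_def using gauss_map_inverse_branch[of N b] N_ge_3 b by simp
  then show "(gauss_map ^^ Suc (Suc j)) (coded_alpha y) = (gauss_map ^^ j) (coded_point y)"
    using g1 unfolding t_def b_def by (simp add: funpow_Suc_right del: funpow.simps)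
qed

lemma coded_alpha_gauss_orbit_bounds:
  assumes "0 \<le> y" "y < 1"
  shows "0 < (gauss_map ^^ j) (coded_alpha y)"
    and "1 \<le> k \<Longrightarrow> gauss_map (coded_alpha y) \<le> (gauss_map ^^ k) (coded_alpha y)"
proof -
  have orbit: "(gauss_map ^^ Suc (Suc i)) (coded_alpha y) \<in> digit_interval N" for i
    using coded_alpha_gauss_orbit(4)[OF assms] funpow_gauss_map_coded_point(2)[OF assms] by simp
  have G: "0 < gauss_map (coded_alpha y)" "gauss_map (coded_alpha y) \<le> 1 / real N"
    using coded_alpha_gauss_orbit(3)[OF assms] digit_interval_unit'[OF coded_point_mem[OF assms]]
      N_ge_3
    by (auto simp: frac_le)
  show "0 < (gauss_map ^^ j) (coded_alpha y)"
  proof (cases "j < 2")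
    case True
    then have "j = 0 \<or> j = 1"
      by auto
    then show ?thesis
      using G coded_alpha_gauss_orbit(1)[OF assms] by auto
  next
    case False
    then obtain i where "j = Suc (Suc i)"
      using le_Suc_ex[of 2 j] by auto
    then show ?thesis
      using orbit[of i] digit_interval_unit' by simp
  qed
  show "gauss_map (coded_alpha y) \<le> (gauss_map ^^ k) (coded_alpha y)" if k: "1 \<le> k"
  proof (cases "k = 1")
    case False
    then have "2 \<le> k"
      using k by simp
    then obtain i where "k = Suc (Suc i)"
      using le_Suc_ex[of 2 k] by auto
    then show ?thesis
      using orbit[of i] G unfolding digit_interval_def by simp
  qed simp
qed

lemma coded_alpha_gauss_orbit_inj:
  assumes y: "y \<in> {0..<1} - periodic_codes"
    and "1 \<le> i" "1 \<le> j" "(gauss_map ^^ i) (coded_alpha y) = (gauss_map ^^ j) (coded_alpha y)"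
  shows "i = j"
proof -
  have y01: "0 \<le> y" "y < 1"
    using y by auto
  have no_cycle: False
    if "1 \<le> i" "i < j" "(gauss_map ^^ i) (coded_alpha y) = (gauss_map ^^ j) (coded_alpha y)" for i j
  proof -
    define i' j' where "i' = i - 1" "j' = j - 1"
    have ij: "i = Suc i'" "j = Suc j'" "i' < j'"
      using that unfolding i'_j'_def by auto
    have "(gauss_map ^^ Suc (Suc i')) (coded_alpha y) = (gauss_map ^^ Suc (Suc j')) (coded_alpha y)"
      using that(3) unfolding ij by simp
    then have "y \<in> periodic_codes"
      using periodic_codes_if_funpow_gauss_map_eq[OF y01 _ ij(3)] coded_alpha_gauss_orbit(4)[OF y01]
      by simp
    then show False
      using y by simp
  qed
  show ?thesis
    using no_cycle[of i j] no_cycle[of j i] assms(2-4) by (cases i j rule: linorder_cases) auto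
qed

lemma coded_alpha_mem:
  assumes y: "y \<in> {0..<1} - periodic_codes"
  shows "coded_alpha y \<in> non_matching_set"
proof -
  have y01: "0 \<le> y" "y < 1"
    using y by auto
  interpret alpha_gt_half "coded_alpha y"
    using coded_alpha_gauss_orbit[OF y01] by unfold_locales
  have "\<not> has_matching (coded_alpha y)"
    using not_has_matching_if_gauss_orbit_inj coded_alpha_gauss_orbit_bounds[OF y01]
      coded_alpha_gauss_orbit_inj[OF y]
    by blast
  then show ?thesis
    unfolding non_matching_set_def using alpha_pos alpha_less_1 by simp
qed

lemma code_eq_if_periodic_prefix_eq:
  assumes "0 < per"
    and y: "0 \<le> y" "y < 1" "\<And>n. p \<le> n \<Longrightarrow> code (n + per) y = code n y"
    and y': "0 \<le> y'" "y' < 1"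
            "\<And>n. p \<le> n \<Longrightarrow> code (n + per) y' = code n y'"
    and prefix: "\<And>n. n < p + per \<Longrightarrow> code n y = code n y'"
  shows "y = y'"
proof -
  have "code n y = code n y'" for n
  proof (induction n rule: less_induct)
    case (less n)
    show ?case
    proof (cases "n < p + per")
      case False
      then have n: "n = (n - per) + per" "p \<le> n - per"
        by auto
      then have "code (n - per) y = code (n - per) y'"
        using less \<open>0 < per\<close> by simp
      then show ?thesis
        using y(3)[OF n(2)] y'(3)[OF n(2)] n(1) by metis
    qed (use prefix in simp)
  qed
  then show ?thesis
    using eq_if_code_eq y y' by blast
qed

lemma countable_periodic_codes: "countable periodic_codes"
proof -
  define P where "P p per = {y \<in> {0..<1::real}. 0 < per \<and> (\<forall>n\<ge>p. code (n + per) y = code n y)}"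
    for p per
  have "countable (P p per)" for p per
  proof -
    define f where "f y = map (\<lambda>n. code n y) [0..<p + per]" for y
    have "inj_on f (P p per)"
    proof (rule inj_onI)
      fix y y'
      assume "y \<in> P p per" "y' \<in> P p per" "f y = f y'"
      then show "y = y'"
        unfolding P_def f_def
        by (intro code_eq_if_periodic_prefix_eq[of per y p y']) (auto simp: map_eq_conv)
    qed
    then show ?thesis
      using countable_image_inj_on countableI_type by blast
  qed
  then have "countable (\<Union>p per. P p per)"
    by (intro countable_UN) auto
  moreover have "periodic_codes \<subseteq> (\<Union>p per. P p per)"
    unfolding periodic_codes_def P_def by blast
  ultimately show ?thesis
    using countable_subset by blast
qed

lemma emeasure_non_periodic_codes: "emeasure lborel ({0..<1} - periodic_codes) = 1"
  using emeasure_Diff_null_set[OF countable_imp_null_set_lborel[OF countable_periodic_codes]]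
  by (simp add: emeasure_lborel_Ico)

lemma hausdorff_measure_non_matching_pos: "hausdorff_measure s non_matching_set \<noteq> 0"
proof (rule hausdorff_measure_pos_if_inverse_hoelder[OF s_pos hoelder_const_pos])
  show "emeasure lborel ({0..<1} - periodic_codes) \<noteq> 0"
    using emeasure_non_periodic_codes by simp
  show "coded_alpha ` ({0..<1} - periodic_codes) \<subseteq> non_matching_set"
    using coded_alpha_mem by blast
  show "\<bar>y - y'\<bar> \<le> hoelder_const * \<bar>coded_alpha y - coded_alpha y'\<bar> powr s"
    if "y \<in> {0..<1} - periodic_codes" "y' \<in> {0..<1} - periodic_codes" for y y'
    using dist_le_coded_alpha that by auto
qed

lemma non_matching_set_nonempty: "non_matching_set \<noteq> {}"
proof -
  have "{0..<1} - periodic_codes \<noteq> {}"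
    using emeasure_non_periodic_codes by (metis emeasure_empty zero_neq_one)
  then show ?thesis
    using coded_alpha_mem by blast
qed

end

lemma cylinder_length_powr_ge:
  assumes "pos_digits v" "s < 1"
  shows "(2 powr (1 - s)) ^ length v * cylinder_length v \<le> cylinder_length v powr s"
proof -
  have pos: "0 < cylinder_length v"
    using cylinder_length_pos[OF assms(1)] .
  have "((1/2) ^ length v) powr (s - 1) \<le> cylinder_length v powr (s - 1)"
    using assms pos cylinder_length_le_power[OF assms(1)] by (intro powr_mono2') auto
  moreover have "((1/2 :: real) ^ length v) powr (s - 1) = (2 powr (1 - s)) ^ length v"
    by (simp add: power_powr powr_divide powr_minus_divide[symmetric])
  ultimately have "cylinder_length v * (2 powr (1 - s)) ^ length v
      \<le> cylinder_length v * cylinder_length v powr (s - 1)"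
    using pos by (intro mult_left_mono) auto
  also have "\<dots> = cylinder_length v powr s"
    using pos powr_mult_base[of "cylinder_length v" "s - 1"] by simp
  finally show ?thesis
    by (simp add: mult.commute)
qed

lemma block_coding_exists:
  assumes "0 < s" "s < 1"
  shows "\<exists>N l. block_coding N l s"
proof -
  define b where "b = (2::real) powr (1 - s)"
  have "1 < b"
    unfolding b_def using assms by (intro gr_one_powr) auto
  define N where "N = nat \<lceil>2 / (1 - 1 / b)\<rceil> + 3"
  have N: "3 \<le> N" "2 / (1 - 1 / b) < real N"
    unfolding N_def by linarith+
  then have "1 / b < 1 - 2 / real N"
    using \<open>1 < b\<close> by (simp add: field_simps)
  then have "1 < b * (1 - 2 / real N)"
    using \<open>1 < b\<close> by (simp add: field_simps)
  then obtain l0 where l0: "2 < (b * (1 - 2 / real N)) ^ l0"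
    using real_arch_pow by blast
  define l where "l = Suc l0"
  have "(b * (1 - 2 / real N)) ^ l0 \<le> (b * (1 - 2 / real N)) ^ l"
    unfolding l_def using \<open>1 < b * (1 - 2 / real N)\<close> by (intro power_increasing) auto
  then have "2 < (b * (1 - 2 / real N)) ^ l"
    using l0 by linarith
  also have "\<dots> = b ^ l * (1 - 2 / (real (N - 1) + 1)) ^ l"
    using N by (simp add: power_mult_distrib of_nat_diff)
  also have "\<dots> \<le> b ^ l * sum_list (map cylinder_length (digit_words (N - 1) l))"
    using sum_cylinder_length_digit_words_ge[of "N - 1" l] N \<open>1 < b\<close>
    by (intro mult_left_mono) auto
  also have "\<dots> = sum_list (map (\<lambda>v. b ^ l * cylinder_length v) (digit_words (N - 1) l))"
    by (simp add: sum_list_const_mult)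
  also have "\<dots> = sum_list (map (\<lambda>v. b ^ length v * cylinder_length v) (digit_words (N - 1) l))"
    using mem_digit_words_iff by (intro arg_cong[where f = sum_list] map_cong) auto
  also have "\<dots> \<le> sum_list (map (\<lambda>v. cylinder_length v powr s) (digit_words (N - 1) l))"
    using cylinder_length_powr_ge pos_digits_digit_words assms(2) unfolding b_def
    by (intro sum_list_mono) blast
  finally have "block_coding N l s"
    using N assms by unfold_locales (simp_all add: l_def)
  then show ?thesis
    by blast
qed

theorem theorem1p1:
  shows "non_matching_set \<in> null_sets lebesgue \<and> hausdorff_dim non_matching_set = 1"
proof
  show "non_matching_set \<in> null_sets lebesgue"
    by (rule non_matching_set_null)
  have "non_matching_set \<subseteq> {0..1}"
    unfolding non_matching_set_def by auto
  then have "hausdorff_measure s non_matching_set = 0" if "1 < s" for s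
    using hausdorff_measure_eq_0_if_subset_unit_interval that by blast
  moreover have "hausdorff_measure s non_matching_set \<noteq> 0" if "0 < s" "s < 1" for s
    using block_coding_exists[OF that] block_coding.hausdorff_measure_non_matching_pos by blast
  moreover obtain x where "x \<in> non_matching_set"
    using block_coding_exists[of "1/2"] block_coding.non_matching_set_nonempty by fastforce
  then have "hausdorff_measure 0 non_matching_set \<noteq> 0"
    by (rule hausdorff_measure_0_nonempty)
  ultimately show "hausdorff_dim non_matching_set = 1"
    by (intro hausdorff_dim_eqI) (auto simp: le_less)
qed

end
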